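(* Let $V$ be a finite-dimensional irreducible $\mathfrak{W}_q$-module. Then there exists a unique quadruple $(m,n,\delta,\lambda)$ with $m,n\in\mathbb N$, $\delta\in\{\pm1\}$, $\lambda\in\mathbb C\setminus\{0\}$ such that $V$ is isomorphic to the $\mathfrak{W}_q$-module $(L_m\otimes L_n)^{\delta,\lambda}$.
   Context: Throughout, $q$ is a nonzero complex number that is not a root of unity; $[x,y]=xy-yx$, $[x,y]_q=qxy-q^{-1}yx$, $[n]_q=\frac{q^n-q^{-n}}{q-q^{-1}}$. $\mathfrak{W}_q$ is the algebra over $\mathbb C$ generated by $E_1,E_2,F_1,F_2,K_1^{\pm1},K_2^{\pm1},I^{\pm1}$ subject to: $I$ is central; $II^{-1}=I^{-1}I=1$, $K_1K_1^{-1}=K_1^{-1}K_1=1$, $K_2K_2^{-1}=K_2^{-1}K_2=1$; $[K_1,E_2]=[K_1,F_2]=[K_1,K_2]=[K_2,E_1]=[K_2,F_1]=0$; $[E_1,K_1]_q=[K_1,F_1]_q=[E_2,K_2]_q=[K_2,F_2]_q=0$; $[E_1,E_2]=[E_1,F_2]=[F_1,E_2]=[F_1,F_2]=0$; $[E_1,F_1]=\frac{K_1-IK_1^{-1}}{q-q^{-1}}$; $[E_2,F_2]=\frac{IK_2-K_2^{-1}}{q-q^{-1}}$. For $m,n\in\mathbb N$, $\delta\in\{\pm1\}$, $\lambda\in\mathbb C\setminus\{0\}$, $(L_m\otimes L_n)^{\delta,\lambda}$ denotes the $(m+1)(n+1)$-dimensional $\mathfrak{W}_q$-module with basis $v_i^{(m)}\otimes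 v_j^{(n)}$ ($0\le i\le m$, $0\le j\le n$) on which: $E_1v_i^{(m)}\otimes v_j^{(n)}=\lambda[i]_q[m-i+1]_qv_{i-1}^{(m)}\otimes v_j^{(n)}$ (zero if $i=0$); $E_2v_i^{(m)}\otimes v_j^{(n)}=\delta\lambda[j]_q[n-j+1]_qv_i^{(m)}\otimes v_{j-1}^{(n)}$ (zero if $j=0$); $F_1v_i^{(m)}\otimes v_j^{(n)}=v_{i+1}^{(m)}\otimes v_j^{(n)}$ (zero if $i=m$); $F_2v_i^{(m)}\otimes v_j^{(n)}=v_i^{(m)}\otimes v_{j+1}^{(n)}$ (zero if $j=n$); $K_1$ acts on $v_i^{(m)}\otimes v_j^{(n)}$ by $\lambda q^{m-2i}$; $K_2$ by $\delta\lambda^{-1}q^{n-2j}$; $I$ by $\lambda^2$. (Equivalently it is the pullback via $E_i\mapsto E_i$ etc. of $L_m\otimes L_n$, with $L_n$ the $(n+1)$-dimensional irreducible $U_q(\mathfrak{sl}_2)$-module of type $1$, twisted by the automorphism $E_1\mapsto\lambda E_1$, $E_2\mapsto\delta\lambda E_2$, $F_i\mapsto F_i$, $K_1^{\pm1}\mapsto\lambda^{\pm1}K_1^{\pm1}$, $K_2^{\pm1}\mapsto\delta\lambda^{\mp1}K_2^{\pm1}$, $I^{\pm1}\mapsto\lambda^{\pm2}I^{\pm1}$.) *)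

theory Defs
  imports Complex_Main "HOL-Library.Function_Algebras"
begin

record 'v wq_ops =
  opE1 :: "'v \<Rightarrow> 'v"
  opE2 :: "'v \<Rightarrow> 'v"
  opF1 :: "'v \<Rightarrow> 'v"
  opF2 :: "'v \<Rightarrow> 'v"
  opK1 :: "'v \<Rightarrow> 'v"
  opK1i :: "'v \<Rightarrow> 'v"
  opK2 :: "'v \<Rightarrow> 'v"
  opK2i :: "'v \<Rightarrow> 'v"
  opI :: "'v \<Rightarrow> 'v"
  opIi :: "'v \<Rightarrow> 'v"

definition wq_gens :: "'v wq_ops \<Rightarrow> ('v \<Rightarrow> 'v) set" where
  "wq_gens r = {opE1 r, opE2 r, opF1 r, opF2 r, opK1 r, opK1i r, opK2 r, opK2i r, opI r, opIi r}"

definition qint :: "complex \<Rightarrow> nat \<Rightarrow> complex" where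
  "qint q n = (q ^ n - inverse q ^ n) / (q - inverse q)"

definition lin_on :: "(complex \<Rightarrow> 'v::ab_group_add \<Rightarrow> 'v) \<Rightarrow> 'v set \<Rightarrow> ('v \<Rightarrow> 'v) \<Rightarrow> bool" where
  "lin_on sc V f \<longleftrightarrow> (\<forall>x\<in>V. f x \<in> V) \<and> (\<forall>x\<in>V. \<forall>y\<in>V. f (x + y) = f x + f y)
      \<and> (\<forall>c. \<forall>x\<in>V. f (sc c x) = sc c (f x))"

definition wq_module :: "complex \<Rightarrow> (complex \<Rightarrow> 'v::ab_group_add \<Rightarrow> 'v) \<Rightarrow> 'v set \<Rightarrow> 'v wq_ops \<Rightarrow> bool" where
  "wq_module q sc V r \<longleftrightarrow>
     vector_space sc \<and> module.subspace sc V \<and> (\<forall>f\<in>wq_gens r. lin_on sc V f) \<and>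
     (\<forall>x\<in>V.
        \<comment> \<open>I central\<close>
        (\<forall>f\<in>wq_gens r. opI r (f x) = f (opI r x)) \<and>
        \<comment> \<open>inverses\<close>
        opI r (opIi r x) = x \<and> opIi r (opI r x) = x \<and>
        opK1 r (opK1i r x) = x \<and> opK1i r (opK1 r x) = x \<and>
        opK2 r (opK2i r x) = x \<and> opK2i r (opK2 r x) = x \<and>
        \<comment> \<open>commutations\<close>
        opK1 r (opE2 r x) = opE2 r (opK1 r x) \<and>
        opK1 r (opF2 r x) = opF2 r (opK1 r x) \<and>
        opK1 r (opK2 r x) = opK2 r (opK1 r x) \<and>
        opK2 r (opE1 r x) = opE1 r (opK2 r x) \<and>
        opK2 r (opF1 r x) = opF1 r (opK2 r x) \<and>
        \<comment> \<open>q-commutators\<close>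
        sc q (opE1 r (opK1 r x)) - sc (inverse q) (opK1 r (opE1 r x)) = 0 \<and>
        sc q (opK1 r (opF1 r x)) - sc (inverse q) (opF1 r (opK1 r x)) = 0 \<and>
        sc q (opE2 r (opK2 r x)) - sc (inverse q) (opK2 r (opE2 r x)) = 0 \<and>
        sc q (opK2 r (opF2 r x)) - sc (inverse q) (opF2 r (opK2 r x)) = 0 \<and>
        \<comment> \<open>commuting E/F of different indices\<close>
        opE1 r (opE2 r x) = opE2 r (opE1 r x) \<and>
        opE1 r (opF2 r x) = opF2 r (opE1 r x) \<and>
        opF1 r (opE2 r x) = opE2 r (opF1 r x) \<and>
        opF1 r (opF2 r x) = opF2 r (opF1 r x) \<and>
        \<comment> \<open>[E1,F1] and [E2,F2]\<close>
        opE1 r (opF1 r x) - opF1 r (opE1 r x)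
          = sc (inverse (q - inverse q)) (opK1 r x - opI r (opK1i r x)) \<and>
        opE2 r (opF2 r x) - opF2 r (opE2 r x)
          = sc (inverse (q - inverse q)) (opI r (opK2 r x) - opK2i r x))"

definition fin_dim :: "(complex \<Rightarrow> 'v::ab_group_add \<Rightarrow> 'v) \<Rightarrow> 'v set \<Rightarrow> bool" where
  "fin_dim sc V \<longleftrightarrow> (\<exists>B. finite B \<and> B \<subseteq> V \<and> module.span sc B = V)"

definition wq_irreducible :: "(complex \<Rightarrow> 'v::ab_group_add \<Rightarrow> 'v) \<Rightarrow> 'v set \<Rightarrow> 'v wq_ops \<Rightarrow> bool" where
  "wq_irreducible sc V r \<longleftrightarrow> V \<noteq> {0} \<and>
     (\<forall>W. module.subspace sc W \<and> W \<subseteq> V \<and> (\<forall>f\<in>wq_gens r. f ` W \<subseteq> W) \<longrightarrow> W = {0} \<or> W = V)"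

definition wq_iso :: "(complex \<Rightarrow> 'v::ab_group_add \<Rightarrow> 'v) \<Rightarrow> 'v set \<Rightarrow> 'v wq_ops \<Rightarrow>
    (complex \<Rightarrow> 'w::ab_group_add \<Rightarrow> 'w) \<Rightarrow> 'w set \<Rightarrow> 'w wq_ops \<Rightarrow> bool" where
  "wq_iso sc V r sc' W r' \<longleftrightarrow> (\<exists>\<phi>. bij_betw \<phi> V W \<and>
      (\<forall>x\<in>V. \<forall>y\<in>V. \<phi> (x + y) = \<phi> x + \<phi> y) \<and> (\<forall>c. \<forall>x\<in>V. \<phi> (sc c x) = sc' c (\<phi> x)) \<and>
      (\<forall>x\<in>V. \<phi> (opE1 r x) = opE1 r' (\<phi> x) \<and> \<phi> (opE2 r x) = opE2 r' (\<phi> x) \<and>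
              \<phi> (opF1 r x) = opF1 r' (\<phi> x) \<and> \<phi> (opF2 r x) = opF2 r' (\<phi> x) \<and>
              \<phi> (opK1 r x) = opK1 r' (\<phi> x) \<and> \<phi> (opK1i r x) = opK1i r' (\<phi> x) \<and>
              \<phi> (opK2 r x) = opK2 r' (\<phi> x) \<and> \<phi> (opK2i r x) = opK2i r' (\<phi> x) \<and>
              \<phi> (opI r x) = opI r' (\<phi> x) \<and> \<phi> (opIi r x) = opIi r' (\<phi> x)))"

text \<open>The module (L_m \<otimes> L_n)^{\<delta>,\<lambda>}: vectors are coordinate functions v :: nat \<times> nat \<Rightarrow> complex,
 v = \<Sum> v(i,j) (v_i^(m) \<otimes> v_j^(n)), supported on {0..m} \<times> {0..n}.\<close>
definition fscale :: "complex \<Rightarrow> (nat \<times> nat \<Rightarrow> complex) \<Rightarrow> (nat \<times> nat \<Rightarrow> complex)" where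
  "fscale c v = (\<lambda>p. c * v p)"

definition Lcarrier :: "nat \<Rightarrow> nat \<Rightarrow> (nat \<times> nat \<Rightarrow> complex) set" where
  "Lcarrier m n = {v. \<forall>i j. (m < i \<or> n < j) \<longrightarrow> v (i, j) = 0}"

definition Lops :: "complex \<Rightarrow> nat \<Rightarrow> nat \<Rightarrow> complex \<Rightarrow> complex \<Rightarrow> (nat \<times> nat \<Rightarrow> complex) wq_ops" where
  "Lops q m n d lam = \<lparr>
     opE1 = (\<lambda>v (i, j). if i < m then lam * qint q (i + 1) * qint q (m - i) * v (i + 1, j) else 0),
     opE2 = (\<lambda>v (i, j). if j < n then d * lam * qint q (j + 1) * qint q (n - j) * v (i, j + 1) else 0),
     opF1 = (\<lambda>v (i, j). if 0 < i \<and> i \<le> m then v (i - 1, j) else 0),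
     opF2 = (\<lambda>v (i, j). if 0 < j \<and> j \<le> n then v (i, j - 1) else 0),
     opK1 = (\<lambda>v (i, j). lam * q powi (int m - 2 * int i) * v (i, j)),
     opK1i = (\<lambda>v (i, j). inverse lam * q powi (2 * int i - int m) * v (i, j)),
     opK2 = (\<lambda>v (i, j). d * inverse lam * q powi (int n - 2 * int j) * v (i, j)),
     opK2i = (\<lambda>v (i, j). inverse d * lam * q powi (2 * int j - int n) * v (i, j)),
     opI = (\<lambda>v p. lam\<^sup>2 * v p),
     opIi = (\<lambda>v p. inverse (lam\<^sup>2) * v p) \<rparr>"

end

theory Submission
  imports Defs "HOL-Computational_Algebra.Fundamental_Theorem_Algebra"
begin

(* On an irreducible module V the central element I acts as a scalar \<nu> = \<lambda>^2, and then both
   (E1, F1, K1) and (E2, F2, \<nu> K2) satisfy the U_q(sl_2)-type relations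
   [E, F] = (K - \<nu> K^-1) / (q - q^-1) and K F = q^-2 F K.  As q is not a root of unity, E and F shift
   K-eigenvalues injectively, so finite dimensionality gives a common eigenvector v of K1, K2 with
   E1 v = E2 v = 0, on which F1 and F2 act nilpotently.  The usual computation of E F^(k+1) v then forces
   the weights of v to be \<lambda> q^m and \<delta> \<lambda>^-1 q^n with \<delta>^2 = 1, and shows that the vectors F1^i F2^j v
   (i \<le> m, j \<le> n) are nonzero and are acted on exactly as the standard basis of (L_m \<otimes> L_n)^{\<delta>,\<lambda>}.
   Having pairwise distinct joint K-weights they are independent, and they span a submodule, hence V.
   For uniqueness, the eigenvalues of I, K1, K2 on (L_m \<otimes> L_n)^{\<delta>,\<lambda>} are \<lambda>^2, \<lambda> q^(m-2i) and
   \<delta> \<lambda>^-1 q^(n-2j), and these sets determine (m, n, \<delta>, \<lambda>). *)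

section \<open>Arithmetic of q-numbers\<close>

lemma power_int_inj_of_not_root_of_unity:
  fixes q :: "'a::field"
  assumes q: "q \<noteq> 0" "\<forall>k::nat. 0 < k \<longrightarrow> q ^ k \<noteq> 1" and eq: "q powi x = q powi y"
  shows "x = y"
proof -
  have "q powi (x - y) = 1" "q powi (y - x) = 1"
    using eq q(1) by (simp_all add: power_int_diff)
  then have "q ^ nat \<bar>x - y\<bar> = 1"
    by (cases "y \<le> x") (simp_all add: power_int_def)
  then have "nat \<bar>x - y\<bar> = 0"
    using q(2) by (metis neq0_conv)
  then show ?thesis by simp
qed

lemma power_inj_of_not_root_of_unity:
  fixes q :: "'a::field"
  assumes "q \<noteq> 0" "\<forall>k::nat. 0 < k \<longrightarrow> q ^ k \<noteq> 1" and "q ^ i = q ^ j"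
  shows "i = j"
  using power_int_inj_of_not_root_of_unity[OF assms(1,2), of "int i" "int j"] assms(3) by simp

lemma inj_power2_mult:
  fixes q \<mu> :: "'a::field"
  assumes q: "q \<noteq> 0" "\<forall>k::nat. 0 < k \<longrightarrow> q ^ k \<noteq> 1" and "\<mu> \<noteq> 0"
  shows "inj (\<lambda>k. (q\<^sup>2) ^ k * \<mu>)" and "inj (\<lambda>k. inverse (q\<^sup>2) ^ k * \<mu>)"
proof -
  have "i = j" if "(q\<^sup>2) ^ i = (q\<^sup>2) ^ j" for i j
    using power_inj_of_not_root_of_unity[OF q, of "2 * i" "2 * j"] that by (simp add: power_mult)
  then show "inj (\<lambda>k. (q\<^sup>2) ^ k * \<mu>)" and "inj (\<lambda>k. inverse (q\<^sup>2) ^ k * \<mu>)"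
    using \<open>\<mu> \<noteq> 0\<close> by (auto intro!: injI simp: power_inverse)
qed

lemma inj_weight_string:
  fixes q c :: "'a::field"
  assumes "q \<noteq> 0" "\<forall>k::nat. 0 < k \<longrightarrow> q ^ k \<noteq> 1" and "c \<noteq> 0"
  shows "inj (\<lambda>i. c * q powi (int M - 2 * int i))"
proof (rule injI)
  fix i j assume "c * q powi (int M - 2 * int i) = c * q powi (int M - 2 * int j)"
  then have "int M - 2 * int i = int M - 2 * int j"
    using assms(3) by (intro power_int_inj_of_not_root_of_unity[OF assms(1,2)]) simp
  then show "i = j" by simp
qed

lemma q_minus_inverse_nonzero:
  fixes q :: "'a::field"
  assumes "q \<noteq> 0" "\<forall>k::nat. 0 < k \<longrightarrow> q ^ k \<noteq> 1"
  shows "q - inverse q \<noteq> 0"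
proof
  assume "q - inverse q = 0"
  then have "q ^ 2 = 1" using assms(1) by (simp add: power2_eq_square field_simps)
  then show False using assms(2) by auto
qed

lemma qint_nonzero:
  assumes "q \<noteq> 0" "\<forall>k::nat. 0 < k \<longrightarrow> q ^ k \<noteq> 1" and "0 < k"
  shows "qint q k \<noteq> 0"
proof -
  have "q ^ k - inverse q ^ k \<noteq> 0"
  proof
    assume "q ^ k - inverse q ^ k = 0"
    then have "q ^ k * q ^ k = 1" using assms(1) by (simp add: power_inverse field_simps)
    then have "q ^ (2 * k) = 1" by (simp add: mult_2 power_add)
    then show False using assms(2,3) by simp
  qed
  then show ?thesis
    using q_minus_inverse_nonzero[OF assms(1,2)] by (simp add: qint_def)
qed

lemma qint_inverse: "qint (inverse q) n = qint q n"
  unfolding qint_def by (metis inverse_inverse_eq minus_diff_eq minus_divide_divide)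

lemma sum_power2_eq_qint:
  assumes "q - inverse q \<noteq> 0"
  shows "(\<Sum>i\<le>k. (q\<^sup>2) ^ i) = qint q (Suc k) * q ^ k"
proof -
  have q: "q \<noteq> 0" using assms by auto
  have q2: "1 - q\<^sup>2 \<noteq> 0"
    using assms q by (auto simp: power2_eq_square field_simps)
  have "(1 - q\<^sup>2) * (\<Sum>i\<le>k. (q\<^sup>2) ^ i) = 1 - (q\<^sup>2) ^ Suc k"
    by (rule sum_gp_basic)
  also have "\<dots> = (1 - q\<^sup>2) * (qint q (Suc k) * q ^ k)"
    using assms q unfolding qint_def
    by (simp add: power_inverse power_mult_distrib power2_eq_square field_simps)
  finally show ?thesis using q2 by simp
qed

lemma sum_inverse_power2_eq_qint:
  assumes "q - inverse q \<noteq> 0"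
  shows "(\<Sum>i\<le>k. inverse (q\<^sup>2) ^ i) = qint q (Suc k) * inverse q ^ k"
proof -
  have "inverse q - inverse (inverse q) \<noteq> 0" using assms by simp
  from sum_power2_eq_qint[OF this] show ?thesis by (simp add: qint_inverse power_inverse)
qed

lemma power_int_diff_double:
  fixes q :: "'a::field"
  assumes "q \<noteq> 0"
  shows "q powi (int m - 2 * int i) = q ^ m * inverse (q\<^sup>2) ^ i"
proof -
  have "q powi (int m - int (2 * i)) = q powi int m / q powi int (2 * i)"
    using power_int_diff[of q "int m" "int (2 * i)"] assms by simp
  then show ?thesis by (simp only: power_int_of_nat) (simp add: power_mult divide_inverse power_inverse)
qed


section \<open>Operators on a finite-dimensional subspace\<close>

context vector_space
begin

lemma q_commutator_eq_0:
  assumes "q \<noteq> 0" and "q *s x - inverse q *s y = 0"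
  shows "y = q\<^sup>2 *s x" and "x = inverse (q\<^sup>2) *s y"
proof -
  have eq: "inverse q *s y = q *s x" using assms(2) by simp
  have "y = q *s inverse q *s y" using assms(1) by simp
  then show "y = q\<^sup>2 *s x" by (simp add: eq power2_eq_square)
  have "x = inverse q *s q *s x" using assms(1) by simp
  then show "x = inverse (q\<^sup>2) *s y" by (simp add: eq[symmetric] power2_eq_square)
qed

end

locale finite_dim_subspace = vector_space sc
  for sc :: "complex \<Rightarrow> 'v::ab_group_add \<Rightarrow> 'v" (infixr \<open>*s\<close> 75) +
  fixes V :: "'v set"
  assumes subspace_V: "subspace V" and fin_dim_V: "fin_dim sc V"
begin

lemma lin_on_mem: "lin_on sc V T \<Longrightarrow> x \<in> V \<Longrightarrow> T x \<in> V"
  by (simp add: lin_on_def)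

lemma lin_on_add: "lin_on sc V T \<Longrightarrow> x \<in> V \<Longrightarrow> y \<in> V \<Longrightarrow> T (x + y) = T x + T y"
  by (simp add: lin_on_def)

lemma lin_on_scale: "lin_on sc V T \<Longrightarrow> x \<in> V \<Longrightarrow> T (c *s x) = c *s T x"
  by (simp add: lin_on_def)

lemma lin_on_zero: "lin_on sc V T \<Longrightarrow> T 0 = 0"
  using lin_on_scale[of T 0 0] subspace_0[OF subspace_V] by simp

lemma lin_on_sum:
  assumes T: "lin_on sc V T" and g: "\<And>x. x \<in> A \<Longrightarrow> g x \<in> V"
  shows "T (sum g A) = (\<Sum>x\<in>A. T (g x))"
proof (cases "finite A")
  case True
  then show ?thesis using g
  proof (induction A rule: finite_induct)
    case (insert a A)
    have "sum g A \<in> V" using insert subspace_sum[OF subspace_V] by blast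
    then show ?case using insert lin_on_add[OF T] by simp
  qed (simp add: lin_on_zero[OF T])
qed (simp add: lin_on_zero[OF T])

lemma lin_on_funpow: "lin_on sc V T \<Longrightarrow> lin_on sc V (T ^^ k)"
  by (induction k) (auto simp: lin_on_def)

lemma lin_on_scaled: "lin_on sc V T \<Longrightarrow> lin_on sc V (\<lambda>x. c *s T x)"
  using subspace_scale[OF subspace_V]
  by (auto simp: lin_on_def scale_right_distrib scale_left_commute)

lemma subspace_eigenspace: "lin_on sc V T \<Longrightarrow> subspace {x \<in> V. T x = \<mu> *s x}"
  using subspace_0[OF subspace_V] subspace_add[OF subspace_V] subspace_scale[OF subspace_V]
  by (auto simp: subspace_def lin_on_zero lin_on_add lin_on_scale scale_right_distrib scale_left_commute)

lemma left_inverse_eigenvector: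
  assumes S: "lin_on sc V S" and y: "y \<in> V" "S (T y) = y" "T y = \<mu> *s y" and \<mu>: "\<mu> \<noteq> 0"
  shows "S y = inverse \<mu> *s y"
proof -
  have "y = \<mu> *s S y" using y lin_on_scale[OF S y(1)] by simp
  then have "inverse \<mu> *s y = S y" using \<mu> by (metis scale_scale scale_one left_inverse)
  then show ?thesis by simp
qed

lemma left_inverse_eigenvalue_nonzero:
  assumes "lin_on sc V S" "y \<in> V" "y \<noteq> 0" "S (T y) = y" "T y = \<mu> *s y"
  shows "\<mu> \<noteq> 0"
  using assms lin_on_zero by force

lemma funpow_commute:
  assumes G: "lin_on sc V G" and x: "x \<in> V" and comm: "\<And>y. y \<in> V \<Longrightarrow> A (G y) = G (A y)"
  shows "A ((G ^^ k) x) = (G ^^ k) (A x)"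
proof (induction k)
  case (Suc k)
  then show ?case using comm[OF lin_on_mem[OF lin_on_funpow[OF G] x]] by simp
qed simp

lemma funpow_eigenvector:
  assumes A: "lin_on sc V A" and x: "x \<in> V" "T x = \<mu> *s x"
    and step: "\<And>y \<mu>. y \<in> V \<Longrightarrow> T y = \<mu> *s y \<Longrightarrow> T (A y) = (c * \<mu>) *s A y"
  shows "T ((A ^^ k) x) = (c ^ k * \<mu>) *s (A ^^ k) x"
proof (induction k)
  case (Suc k)
  have "T (A ((A ^^ k) x)) = (c * (c ^ k * \<mu>)) *s A ((A ^^ k) x)"
    by (rule step[OF lin_on_mem[OF lin_on_funpow[OF A] x(1)] Suc])
  then show ?case by (simp add: mult.assoc)
qed (simp add: x)

lemma funpow_commuting_eigenvector:
  assumes A: "lin_on sc V A" and x: "x \<in> V" "T x = \<mu> *s x" and comm: "\<And>y. y \<in> V \<Longrightarrow> T (A y) = A (T y)"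
  shows "T ((A ^^ k) x) = \<mu> *s (A ^^ k) x"
proof -
  have "T (A y) = (1 * \<mu>') *s A y" if "y \<in> V" "T y = \<mu>' *s y" for y \<mu>'
    using that comm lin_on_scale[OF A] by simp
  from funpow_eigenvector[OF A x this] show ?thesis by simp
qed

lemma eigenvectors_sum_eq_0:
  assumes T: "lin_on sc V T" and fin: "finite S" and inj: "inj_on \<mu> S"
    and eig: "\<And>s. s \<in> S \<Longrightarrow> w s \<in> V \<and> T (w s) = \<mu> s *s w s" and sum0: "sum w S = 0"
  shows "\<forall>s\<in>S. w s = 0"
  using fin inj eig sum0
proof (induction S arbitrary: w rule: finite_induct)
  case (insert a S)
  let ?w' = "\<lambda>s. (\<mu> s - \<mu> a) *s w s"
  have inj_S: "inj_on \<mu> S" using insert.prems(1) by simp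
  have \<mu>_a: "\<mu> s \<noteq> \<mu> a" if "s \<in> S" for s
    using insert.prems(1) insert.hyps that by (auto simp: inj_on_def)
  have "T (sum w (insert a S)) = (\<Sum>s\<in>insert a S. T (w s))"
    using insert.prems(2) by (intro lin_on_sum[OF T]) blast
  also have "\<dots> = (\<Sum>s\<in>insert a S. \<mu> s *s w s)"
    using insert.prems(2) by (intro sum.cong) blast+
  finally have "(\<Sum>s\<in>insert a S. \<mu> s *s w s) = 0"
    using insert.prems(3) lin_on_zero[OF T] by simp
  moreover have "(\<Sum>s\<in>insert a S. ?w' s) = (\<Sum>s\<in>insert a S. \<mu> s *s w s) - \<mu> a *s sum w (insert a S)"
    by (simp add: scale_left_diff_distrib sum_subtractf scale_sum_right)
  ultimately have "(\<Sum>s\<in>insert a S. ?w' s) = 0"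
    using insert.prems(3) by simp
  then have "sum ?w' S = 0"
    using insert.hyps by simp
  moreover have "?w' s \<in> V \<and> T (?w' s) = \<mu> s *s ?w' s" if "s \<in> S" for s
    using insert.prems(2) that lin_on_scale[OF T] subspace_scale[OF subspace_V]
    by (auto simp: scale_left_commute)
  ultimately have "\<forall>s\<in>S. ?w' s = 0"
    by (intro insert.IH[OF inj_S]) auto
  then have "\<forall>s\<in>S. w s = 0" using \<mu>_a by auto
  then show ?case using insert.prems(3) insert.hyps by simp
qed simp

lemma sequence_nontrivial_relation:
  fixes g :: "nat \<Rightarrow> 'v"
  assumes g: "\<And>k. g k \<in> V"
  obtains N c where "\<exists>k\<le>N. c k \<noteq> 0" and "(\<Sum>k\<le>N. c k *s g k) = 0"
proof -
  obtain B where B: "finite B" "span B = V" using fin_dim_V unfolding fin_dim_def by blast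
  define N where "N = card B"
  have "\<exists>c. (\<exists>k\<le>N. c k \<noteq> 0) \<and> (\<Sum>k\<le>N. c k *s g k) = 0"
  proof (cases "inj_on g {..N}")
    case False
    then obtain i j where ij: "i \<le> N" "j \<le> N" "i \<noteq> j" "g i = g j" by (auto simp: inj_on_def)
    define c where "c k = (if k = i then 1 else 0) - (if k = j then 1 else (0::complex))" for k
    have "(\<Sum>k\<le>N. c k *s g k) = g i - g j"
      using ij(1,2) by (simp add: c_def scale_left_diff_distrib sum_subtractf if_distrib[of "\<lambda>c. c *s _"]
          cong: if_cong)
    then show ?thesis using ij by (intro exI[of _ c]) (auto simp: c_def)
  next
    case True
    then have "card (g ` {..N}) = Suc N" by (simp add: card_image)
    moreover have "g ` {..N} \<subseteq> span B" using g B(2) by blast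
    ultimately have "\<not> independent (g ` {..N})"
      using independent_span_bound[OF B(1)] unfolding N_def by fastforce
    then obtain u where u: "\<exists>v\<in>g ` {..N}. u v \<noteq> 0" "(\<Sum>v\<in>g ` {..N}. u v *s v) = 0"
      using dependent_finite[of "g ` {..N}"] by auto
    have "(\<Sum>k\<le>N. u (g k) *s g k) = 0" using u(2) sum.reindex[OF True, of "\<lambda>v. u v *s v"] by simp
    then show ?thesis using u(1) by (intro exI[of _ "\<lambda>k. u (g k)"]) auto
  qed
  then show ?thesis using that by blast
qed

lemma eigenvector_sequence_has_zero:
  fixes f :: "nat \<Rightarrow> 'v"
  assumes T: "lin_on sc V T" and f: "\<And>k. f k \<in> V" "\<And>k. T (f k) = \<mu> k *s f k" and inj: "inj \<mu>"
  shows "\<exists>k. f k = 0"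
proof -
  obtain N c where c: "\<exists>k\<le>N. c k \<noteq> 0" "(\<Sum>k\<le>N. c k *s f k) = 0"
    using f(1) by (rule sequence_nontrivial_relation)
  have "c k *s f k \<in> V \<and> T (c k *s f k) = \<mu> k *s c k *s f k" for k
    using f lin_on_scale[OF T] subspace_scale[OF subspace_V] by (simp add: scale_left_commute)
  then have "\<forall>k\<in>{..N}. c k *s f k = 0"
    using eigenvectors_sum_eq_0[OF T finite_atMost inj_on_subset[OF inj subset_UNIV], where w = "\<lambda>k. c k *s f k"]
      c(2) by blast
  then show ?thesis using c(1) by auto
qed

lemma funpow_last_nonzero:
  assumes T: "lin_on sc V T" and A: "lin_on sc V A" and x: "x \<in> V" "x \<noteq> 0" "T x = \<mu> *s x"
    and step: "\<And>y \<mu>. y \<in> V \<Longrightarrow> T y = \<mu> *s y \<Longrightarrow> T (A y) = (c * \<mu>) *s A y"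
    and inj: "inj (\<lambda>k. c ^ k * \<mu>)"
  obtains j where "(A ^^ j) x \<noteq> 0" and "(A ^^ Suc j) x = 0"
proof -
  obtain k where "(A ^^ k) x = 0"
    using eigenvector_sequence_has_zero[OF T _ funpow_eigenvector[OF A x(1,3) step] inj]
      lin_on_mem[OF lin_on_funpow[OF A] x(1)] by blast
  then have "\<exists>j. (A ^^ j) x \<noteq> 0 \<and> (A ^^ Suc j) x = 0"
    using x(2) by (induction k) auto
  then show ?thesis using that by blast
qed

definition poly_op :: "('v \<Rightarrow> 'v) \<Rightarrow> complex poly \<Rightarrow> 'v \<Rightarrow> 'v" where
  "poly_op T p x = (\<Sum>k\<le>degree p. coeff p k *s (T ^^ k) x)"

lemma poly_op_eq_sum: "degree p \<le> N \<Longrightarrow> poly_op T p x = (\<Sum>k\<le>N. coeff p k *s (T ^^ k) x)"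
  unfolding poly_op_def by (rule sum.mono_neutral_left) (auto simp: coeff_eq_0)

lemma poly_op_mem:
  assumes W: "subspace W" "\<And>y. y \<in> W \<Longrightarrow> T y \<in> W" and x: "x \<in> W"
  shows "poly_op T p x \<in> W"
proof -
  have "(T ^^ k) x \<in> W" for k by (induction k) (simp_all add: x W(2))
  then show ?thesis
    unfolding poly_op_def by (intro subspace_sum[OF W(1)] subspace_scale[OF W(1)])
qed

lemma poly_op_linear_factor:
  assumes T: "lin_on sc V T" and x: "x \<in> V"
  shows "poly_op T ([:-z, 1:] * p) x = T (poly_op T p x) - z *s poly_op T p x"
proof -
  define N where "N = Suc (degree p)"
  have deg: "degree ([:-z, 1:] * p) \<le> N"
    unfolding N_def using degree_mult_le[of "[:-z, 1:]" p] by simp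
  have Tk: "(T ^^ k) x \<in> V" for k using lin_on_mem[OF lin_on_funpow[OF T] x] .
  have "poly_op T ([:-z, 1:] * p) x = (\<Sum>k\<le>N. (coeff (pCons 0 p) k - z * coeff p k) *s (T ^^ k) x)"
    unfolding poly_op_eq_sum[OF deg] by (simp add: mult_pCons_left)
  also have "\<dots> = (\<Sum>k\<le>N. coeff (pCons 0 p) k *s (T ^^ k) x) - z *s (\<Sum>k\<le>N. coeff p k *s (T ^^ k) x)"
    by (simp add: scale_left_diff_distrib sum_subtractf scale_sum_right)
  also have "(\<Sum>k\<le>N. coeff (pCons 0 p) k *s (T ^^ k) x) = (\<Sum>k\<le>degree p. coeff p k *s (T ^^ Suc k) x)"
    unfolding N_def by (subst sum.atMost_Suc_shift) simp
  also have "\<dots> = T (poly_op T p x)"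
    unfolding poly_op_def using Tk subspace_scale[OF subspace_V]
    by (simp add: lin_on_sum[OF T] lin_on_scale[OF T])
  also have "(\<Sum>k\<le>N. coeff p k *s (T ^^ k) x) = poly_op T p x"
    using poly_op_eq_sum[of p N] unfolding N_def by simp
  finally show ?thesis .
qed

lemma eigenvector_of_annihilating_poly:
  assumes T: "lin_on sc V T" and W: "subspace W" "W \<subseteq> V" "\<And>y. y \<in> W \<Longrightarrow> T y \<in> W"
    and x: "x \<in> W" "x \<noteq> 0" and p: "p \<noteq> 0" "poly_op T p x = 0"
  shows "\<exists>\<mu> y. y \<in> W \<and> y \<noteq> 0 \<and> T y = \<mu> *s y"
  using p
proof (induction "degree p" arbitrary: p rule: less_induct)
  case less
  show ?case
  proof (cases "degree p = 0")
    case True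
    then have "coeff p 0 *s x = 0" "coeff p 0 \<noteq> 0"
      using less.prems leading_coeff_0_iff[of p] by (simp_all add: poly_op_def)
    then show ?thesis using x(2) by simp
  next
    case False
    then have "\<not> constant (poly p)" using constant_degree[of p] by simp
    then obtain z where "poly p z = 0" using fundamental_theorem_of_algebra by blast
    then obtain p' where p': "p = [:-z, 1:] * p'" by (metis dvdE poly_eq_0_iff_dvd)
    have "p' \<noteq> 0" using p' less.prems(1) by auto
    then have "degree p = Suc (degree p')" using p' degree_mult_eq[of "[:-z, 1:]" p'] by simp
    then have deg: "degree p' < degree p" by simp
    define y where "y = poly_op T p' x"
    have "y \<in> W" unfolding y_def using poly_op_mem[OF W(1,3) x(1)] .
    moreover have "T y = z *s y"
      using poly_op_linear_factor[OF T, of x z p'] less.prems(2) p' x(1) W(2) unfolding y_def by auto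
    moreover note less.hyps[OF deg \<open>p' \<noteq> 0\<close>]
    ultimately show ?thesis unfolding y_def by blast
  qed
qed

lemma exists_annihilating_poly:
  assumes T: "lin_on sc V T" and x: "x \<in> V"
  obtains p where "p \<noteq> 0" and "poly_op T p x = 0"
proof -
  obtain N c where c: "\<exists>k\<le>N. c k \<noteq> 0" "(\<Sum>k\<le>N. c k *s (T ^^ k) x) = 0"
    using lin_on_mem[OF lin_on_funpow[OF T] x] by (rule sequence_nontrivial_relation)
  define p where "p = (\<Sum>k\<le>N. monom (c k) k)"
  have coeff_p: "coeff p k = (if k \<le> N then c k else 0)" for k
    unfolding p_def by (simp add: coeff_sum coeff_monom)
  have "p \<noteq> 0" using c(1) coeff_p by (metis coeff_0)
  moreover have "degree p \<le> N" using coeff_p by (intro degree_le) auto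
  then have "poly_op T p x = 0" using c(2) coeff_p by (simp add: poly_op_eq_sum)
  ultimately show ?thesis using that by blast
qed

lemma invariant_subspace_has_eigenvector:
  assumes T: "lin_on sc V T"
    and W: "subspace W" "W \<subseteq> V" "\<And>y. y \<in> W \<Longrightarrow> T y \<in> W" "W \<noteq> {0}"
  obtains \<mu> y where "y \<in> W" "y \<noteq> 0" "T y = \<mu> *s y"
proof -
  obtain x where x: "x \<in> W" "x \<noteq> 0" using W(1,4) subspace_0 by blast
  moreover obtain p where "p \<noteq> 0" "poly_op T p x = 0"
    using exists_annihilating_poly[OF T] W(2) x(1) by blast
  ultimately show ?thesis using eigenvector_of_annihilating_poly[OF T W(1-3)] that by blast
qed

end

section \<open>Highest weight vectors for the relations of U_q(sl_2)\<close>

(* Modelled on (E1, F1, K1) and (E2, F2, \<nu> K2) in a W_q-module on which I acts as the scalar \<nu>. *)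
locale uq_sl2_action = finite_dim_subspace sc V
  for sc :: "complex \<Rightarrow> 'v::ab_group_add \<Rightarrow> 'v" (infixr \<open>*s\<close> 75) and V +
  fixes q \<nu> :: complex and E F K Ki :: "'v \<Rightarrow> 'v"
  assumes q_nonzero: "q \<noteq> 0" and q_not_root_of_unity: "\<forall>k::nat. 0 < k \<longrightarrow> q ^ k \<noteq> 1"
    and lin_E: "lin_on sc V E" and lin_F: "lin_on sc V F"
    and lin_K: "lin_on sc V K" and lin_Ki: "lin_on sc V Ki"
    and Ki_K: "x \<in> V \<Longrightarrow> Ki (K x) = x"
    and K_F: "x \<in> V \<Longrightarrow> K (F x) = inverse (q\<^sup>2) *s F (K x)"
    and E_F: "x \<in> V \<Longrightarrow> E (F x) - F (E x) = inverse (q - inverse q) *s (K x - \<nu> *s Ki x)"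
begin

definition highest_weight_vector :: "'v \<Rightarrow> complex \<Rightarrow> bool" where
  "highest_weight_vector u a \<longleftrightarrow> u \<in> V \<and> u \<noteq> 0 \<and> E u = 0 \<and> K u = a *s u"

lemma highest_weight_nonzero: "highest_weight_vector u a \<Longrightarrow> a \<noteq> 0"
  unfolding highest_weight_vector_def
  using left_inverse_eigenvalue_nonzero[where T = K, OF lin_Ki] Ki_K by blast

lemma K_F_eigenvector: "y \<in> V \<Longrightarrow> K y = \<mu> *s y \<Longrightarrow> K (F y) = (inverse (q\<^sup>2) * \<mu>) *s F y"
  by (simp add: K_F lin_on_scale[OF lin_F])

lemma K_Fpow: "u \<in> V \<Longrightarrow> K u = a *s u \<Longrightarrow> K ((F ^^ k) u) = (inverse (q\<^sup>2) ^ k * a) *s (F ^^ k) u"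
  by (rule funpow_eigenvector[OF lin_F]) (simp_all add: K_F_eigenvector)

lemma E_F_eigenvector:
  assumes y: "y \<in> V" "K y = \<mu> *s y" and \<mu>: "\<mu> \<noteq> 0"
  shows "E (F y) = F (E y) + (inverse (q - inverse q) * (\<mu> - \<nu> * inverse \<mu>)) *s y"
proof -
  have "Ki y = inverse \<mu> *s y" by (rule left_inverse_eigenvector[where T = K, OF lin_Ki y(1) Ki_K[OF y(1)] y(2) \<mu>])
  then show ?thesis using E_F[OF y(1)] y(2)
    by (simp add: algebra_simps scale_left_diff_distrib scale_right_diff_distrib)
qed

lemma E_Fpow_Suc_sum:
  assumes u: "highest_weight_vector u a"
  shows "E ((F ^^ Suc k) u) = (\<Sum>i\<le>k. inverse (q - inverse q)
            * (inverse (q\<^sup>2) ^ i * a - \<nu> * inverse (inverse (q\<^sup>2) ^ i * a))) *s (F ^^ k) u"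
proof -
  have uV: "u \<in> V" and Eu: "E u = 0" and Ku: "K u = a *s u" and a: "a \<noteq> 0"
    using u highest_weight_nonzero[OF u] unfolding highest_weight_vector_def by auto
  have FkV: "(F ^^ k) u \<in> V" for k using lin_on_mem[OF lin_on_funpow[OF lin_F] uV] .
  have weight_nonzero: "inverse (q\<^sup>2) ^ k * a \<noteq> 0" for k using a q_nonzero by simp
  show ?thesis
  proof (induction k)
    case 0
    show ?case using E_F_eigenvector[OF uV Ku a] Eu lin_on_zero[OF lin_F] by simp
  next
    case (Suc k)
    have "E ((F ^^ Suc (Suc k)) u) = E (F ((F ^^ Suc k) u))" by simp
    also have "\<dots> = F (E ((F ^^ Suc k) u)) + (inverse (q - inverse q)
            * (inverse (q\<^sup>2) ^ Suc k * a - \<nu> * inverse (inverse (q\<^sup>2) ^ Suc k * a))) *s (F ^^ Suc k) u"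
      by (rule E_F_eigenvector[OF FkV K_Fpow[OF uV Ku] weight_nonzero])
    also have "F (E ((F ^^ Suc k) u)) = (\<Sum>i\<le>k. inverse (q - inverse q)
            * (inverse (q\<^sup>2) ^ i * a - \<nu> * inverse (inverse (q\<^sup>2) ^ i * a))) *s (F ^^ Suc k) u"
      by (simp add: Suc.IH[simplified] lin_on_scale[OF lin_F FkV])
    finally show ?case by (simp add: scale_left_distrib)
  qed
qed

lemma E_Fpow_Suc:
  assumes u: "highest_weight_vector u a"
  shows "E ((F ^^ Suc k) u)
    = (inverse (q - inverse q) * qint q (Suc k) * (a * inverse q ^ k - \<nu> * inverse a * q ^ k)) *s (F ^^ k) u"
proof -
  have "q - inverse q \<noteq> 0" by (rule q_minus_inverse_nonzero[OF q_nonzero q_not_root_of_unity])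
  have "(\<Sum>i\<le>k. inverse (q - inverse q) * (inverse (q\<^sup>2) ^ i * a - \<nu> * inverse (inverse (q\<^sup>2) ^ i * a)))
      = inverse (q - inverse q) * (a * (\<Sum>i\<le>k. inverse (q\<^sup>2) ^ i) - \<nu> * inverse a * (\<Sum>i\<le>k. (q\<^sup>2) ^ i))"
    by (simp add: sum_distrib_left sum_subtractf power_inverse algebra_simps)
  also have "\<dots> = inverse (q - inverse q) * qint q (Suc k) * (a * inverse q ^ k - \<nu> * inverse a * q ^ k)"
    using \<open>q - inverse q \<noteq> 0\<close>
    by (simp add: sum_power2_eq_qint sum_inverse_power2_eq_qint algebra_simps)
  finally show ?thesis using E_Fpow_Suc_sum[OF u] by simp
qed

lemma Fpow_last_nonzero:
  assumes u: "highest_weight_vector u a"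
  obtains m where "(F ^^ m) u \<noteq> 0" and "(F ^^ Suc m) u = 0"
proof -
  have "inj (\<lambda>k. inverse (q\<^sup>2) ^ k * a)"
    using inj_power2_mult(2)[OF q_nonzero q_not_root_of_unity highest_weight_nonzero[OF u]] .
  then show ?thesis
    using funpow_last_nonzero[OF lin_K lin_F _ _ _ K_F_eigenvector] u that
    unfolding highest_weight_vector_def by blast
qed

lemma highest_weight_square:
  assumes u: "highest_weight_vector u a" and m: "(F ^^ m) u \<noteq> 0" "(F ^^ Suc m) u = 0"
  shows "a\<^sup>2 = \<nu> * q ^ (2 * m)"
proof -
  have a: "a \<noteq> 0" by (rule highest_weight_nonzero[OF u])
  have "(inverse (q - inverse q) * qint q (Suc m) * (a * inverse q ^ m - \<nu> * inverse a * q ^ m)) *s (F ^^ m) u = 0"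
    using E_Fpow_Suc[OF u, of m] m(2) lin_on_zero[OF lin_E] by simp
  then have "a * inverse q ^ m = \<nu> * inverse a * q ^ m"
    using m(1) q_minus_inverse_nonzero[OF q_nonzero q_not_root_of_unity]
      qint_nonzero[OF q_nonzero q_not_root_of_unity, of "Suc m"] by simp
  then show ?thesis
    using a q_nonzero by (simp add: field_simps power2_eq_square power_mult power_inverse)
qed

lemma E_Fpow_Suc_qint:
  assumes u: "highest_weight_vector u (\<kappa> * q ^ m)" and \<nu>: "\<nu> = \<kappa>\<^sup>2" and k: "k \<le> m"
  shows "E ((F ^^ Suc k) u) = (\<kappa> * qint q (Suc k) * qint q (m - k)) *s (F ^^ k) u"
proof -
  have \<kappa>: "\<kappa> \<noteq> 0" using highest_weight_nonzero[OF u] by simp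
  have "q ^ m = q ^ (m - k) * q ^ k" using k by (simp flip: power_add)
  then have eq: "\<kappa> * q ^ m * inverse q ^ k - \<nu> * inverse (\<kappa> * q ^ m) * q ^ k
      = \<kappa> * (q ^ (m - k) - inverse q ^ (m - k))"
    using \<kappa> q_nonzero \<nu> by (simp add: field_simps power2_eq_square power_inverse)
  have "inverse (q - inverse q) * qint q (Suc k) * (\<kappa> * q ^ m * inverse q ^ k - \<nu> * inverse (\<kappa> * q ^ m) * q ^ k)
      = \<kappa> * qint q (Suc k) * qint q (m - k)"
    unfolding eq by (simp add: qint_def[of q "m - k"] divide_inverse mult_ac)
  then show ?thesis using E_Fpow_Suc[OF u, of k] by simp
qed

lemma Fpow_nonzero:
  assumes u: "highest_weight_vector u (\<kappa> * q ^ m)" and \<nu>: "\<nu> = \<kappa>\<^sup>2" and k: "k \<le> m"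
  shows "(F ^^ k) u \<noteq> 0"
  using k
proof (induction k)
  case 0
  then show ?case using u by (simp add: highest_weight_vector_def)
next
  case (Suc k)
  have "\<kappa> \<noteq> 0" using highest_weight_nonzero[OF u] by simp
  moreover have "qint q (Suc k) \<noteq> 0" "qint q (m - k) \<noteq> 0"
    using Suc.prems qint_nonzero[OF q_nonzero q_not_root_of_unity] by simp_all
  ultimately show ?case
    using E_Fpow_Suc_qint[OF u \<nu>, of k] Suc lin_on_zero[OF lin_E] by auto
qed

end

section \<open>Irreducible finite-dimensional W_q-modules\<close>

locale wq_irreducible_module = finite_dim_subspace sc V
  for sc :: "complex \<Rightarrow> 'v::ab_group_add \<Rightarrow> 'v" (infixr \<open>*s\<close> 75) and V +
  fixes q :: complex and r :: "'v wq_ops"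
  assumes q_nonzero: "q \<noteq> 0" and q_not_root_of_unity: "\<forall>k::nat. 0 < k \<longrightarrow> q ^ k \<noteq> 1"
    and module: "wq_module q sc V r" and irreducible: "wq_irreducible sc V r"
begin

abbreviation "E1 \<equiv> opE1 r"
abbreviation "E2 \<equiv> opE2 r"
abbreviation "F1 \<equiv> opF1 r"
abbreviation "F2 \<equiv> opF2 r"
abbreviation "K1 \<equiv> opK1 r"
abbreviation "K1i \<equiv> opK1i r"
abbreviation "K2 \<equiv> opK2 r"
abbreviation "K2i \<equiv> opK2i r"
abbreviation "I \<equiv> opI r"
abbreviation "Ii \<equiv> opIi r"

lemma lin_on_generator: "f \<in> wq_gens r \<Longrightarrow> lin_on sc V f"
  using module by (simp add: wq_module_def)

lemma
  shows lin_E1: "lin_on sc V E1" and lin_E2: "lin_on sc V E2"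
    and lin_F1: "lin_on sc V F1" and lin_F2: "lin_on sc V F2"
    and lin_K1: "lin_on sc V K1" and lin_K1i: "lin_on sc V K1i"
    and lin_K2: "lin_on sc V K2" and lin_K2i: "lin_on sc V K2i"
    and lin_I: "lin_on sc V I" and lin_Ii: "lin_on sc V Ii"
  by (simp_all add: lin_on_generator wq_gens_def)

lemma
  assumes "x \<in> V"
  shows I_commute: "\<forall>f\<in>wq_gens r. I (f x) = f (I x)"
    and Ii_I: "Ii (I x) = x" and K1i_K1: "K1i (K1 x) = x" and K2i_K2: "K2i (K2 x) = x"
    and K1_E2: "K1 (E2 x) = E2 (K1 x)" and K1_F2: "K1 (F2 x) = F2 (K1 x)"
    and K1_K2: "K1 (K2 x) = K2 (K1 x)" and K2_E1: "K2 (E1 x) = E1 (K2 x)"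
    and K2_F1: "K2 (F1 x) = F1 (K2 x)" and E1_E2: "E1 (E2 x) = E2 (E1 x)"
    and E1_F2: "E1 (F2 x) = F2 (E1 x)" and F1_E2: "F1 (E2 x) = E2 (F1 x)"
    and F1_F2: "F1 (F2 x) = F2 (F1 x)"
    and E1_F1: "E1 (F1 x) - F1 (E1 x) = inverse (q - inverse q) *s (K1 x - I (K1i x))"
    and E2_F2: "E2 (F2 x) - F2 (E2 x) = inverse (q - inverse q) *s (I (K2 x) - K2i x)"
  using module assms unfolding wq_module_def by blast+

lemma
  assumes x: "x \<in> V"
  shows K1_E1: "K1 (E1 x) = q\<^sup>2 *s E1 (K1 x)" and K1_F1: "K1 (F1 x) = inverse (q\<^sup>2) *s F1 (K1 x)"
    and K2_E2: "K2 (E2 x) = q\<^sup>2 *s E2 (K2 x)" and K2_F2: "K2 (F2 x) = inverse (q\<^sup>2) *s F2 (K2 x)"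
proof -
  have "q *s E1 (K1 x) - inverse q *s K1 (E1 x) = 0" "q *s K1 (F1 x) - inverse q *s F1 (K1 x) = 0"
    "q *s E2 (K2 x) - inverse q *s K2 (E2 x) = 0" "q *s K2 (F2 x) - inverse q *s F2 (K2 x) = 0"
    using module x unfolding wq_module_def by blast+
  then show "K1 (E1 x) = q\<^sup>2 *s E1 (K1 x)" "K1 (F1 x) = inverse (q\<^sup>2) *s F1 (K1 x)"
    "K2 (E2 x) = q\<^sup>2 *s E2 (K2 x)" "K2 (F2 x) = inverse (q\<^sup>2) *s F2 (K2 x)"
    using q_commutator_eq_0[OF q_nonzero] by blast+
qed

lemma V_nonzero: "V \<noteq> {0}"
  using irreducible unfolding wq_irreducible_def by blast

lemma I_acts_as_scalar:
  obtains \<nu> where "\<nu> \<noteq> 0" and "\<And>x. x \<in> V \<Longrightarrow> I x = \<nu> *s x"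
proof -
  obtain \<nu> x where x: "x \<in> V" "x \<noteq> 0" "I x = \<nu> *s x"
    using invariant_subspace_has_eigenvector[OF lin_I subspace_V subset_refl lin_on_mem[OF lin_I] V_nonzero]
    by blast
  \<comment> \<open>Schur's lemma: the eigenspace of the central element I is a nonzero submodule.\<close>
  define W where "W = {y \<in> V. I y = \<nu> *s y}"
  have "f ` W \<subseteq> W" if f: "f \<in> wq_gens r" for f
  proof
    fix y assume "y \<in> f ` W"
    then obtain z where z: "z \<in> V" "I z = \<nu> *s z" "y = f z" unfolding W_def by blast
    have "I (f z) = \<nu> *s f z"
      using I_commute[OF z(1)] f z(2) lin_on_scale[OF lin_on_generator[OF f] z(1)] by simp
    then show "y \<in> W" using z lin_on_mem[OF lin_on_generator[OF f]] unfolding W_def by blast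
  qed
  then have "W = V"
    using irreducible subspace_eigenspace[OF lin_I] x unfolding wq_irreducible_def W_def by blast
  moreover have "\<nu> \<noteq> 0"
    using left_inverse_eigenvalue_nonzero[where T = I, OF lin_Ii x(1,2) Ii_I[OF x(1)] x(3)] .
  ultimately show ?thesis using that unfolding W_def by blast
qed

lemma K1_E1_eigenvector: "y \<in> V \<Longrightarrow> K1 y = \<mu> *s y \<Longrightarrow> K1 (E1 y) = (q\<^sup>2 * \<mu>) *s E1 y"
  by (simp add: K1_E1 lin_on_scale[OF lin_E1])

lemma K2_E2_eigenvector: "y \<in> V \<Longrightarrow> K2 y = \<mu> *s y \<Longrightarrow> K2 (E2 y) = (q\<^sup>2 * \<mu>) *s E2 y"
  by (simp add: K2_E2 lin_on_scale[OF lin_E2])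

lemma exists_joint_eigenvector:
  obtains w a b where "w \<in> V" "w \<noteq> 0" "K1 w = a *s w" "K2 w = b *s w"
proof -
  obtain a w0 where w0: "w0 \<in> V" "w0 \<noteq> 0" "K1 w0 = a *s w0"
    using invariant_subspace_has_eigenvector[OF lin_K1 subspace_V subset_refl lin_on_mem[OF lin_K1] V_nonzero]
    by blast
  let ?W = "{y \<in> V. K1 y = a *s y}"
  have K2_W: "K2 y \<in> ?W" if "y \<in> ?W" for y
  proof -
    have "y \<in> V" "K1 y = a *s y" using that by simp_all
    then show ?thesis using K1_K2 lin_on_mem[OF lin_K2] lin_on_scale[OF lin_K2] by simp
  qed
  have "w0 \<in> ?W" using w0 by simp
  then have W_nonzero: "?W \<noteq> {0}" using w0(2) by blast
  obtain b w where "w \<in> ?W" "w \<noteq> 0" "K2 w = b *s w"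
    by (rule invariant_subspace_has_eigenvector[OF lin_K2 subspace_eigenspace[OF lin_K1] _ K2_W W_nonzero])
      blast
  then show ?thesis using that by blast
qed

lemma exists_joint_eigenvector_E1_zero:
  obtains w a b where "w \<in> V" "w \<noteq> 0" "K1 w = a *s w" "K2 w = b *s w" "E1 w = 0"
proof -
  obtain w a b where w: "w \<in> V" "w \<noteq> 0" "K1 w = a *s w" "K2 w = b *s w"
    by (rule exists_joint_eigenvector)
  have "a \<noteq> 0"
    using left_inverse_eigenvalue_nonzero[where T = K1, OF lin_K1i w(1,2) K1i_K1[OF w(1)] w(3)] .
  then obtain k where k: "(E1 ^^ k) w \<noteq> 0" "(E1 ^^ Suc k) w = 0"
    using funpow_last_nonzero[OF lin_K1 lin_E1 w(1,2,3) K1_E1_eigenvector] inj_power2_mult(1)[OF q_nonzero q_not_root_of_unity]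
    by blast
  show ?thesis
  proof (rule that)
    show "(E1 ^^ k) w \<in> V" using lin_on_mem[OF lin_on_funpow[OF lin_E1] w(1)] .
    show "K1 ((E1 ^^ k) w) = ((q\<^sup>2) ^ k * a) *s (E1 ^^ k) w"
      by (rule funpow_eigenvector[OF lin_E1 w(1,3) K1_E1_eigenvector])
    show "K2 ((E1 ^^ k) w) = b *s (E1 ^^ k) w"
      by (rule funpow_commuting_eigenvector[OF lin_E1 w(1,4) K2_E1])
  qed (use k in simp_all)
qed

lemma exists_highest_weight_vector:
  obtains v a b where "v \<in> V" "v \<noteq> 0" "K1 v = a *s v" "K2 v = b *s v" "E1 v = 0" "E2 v = 0"
proof -
  obtain w a b where w: "w \<in> V" "w \<noteq> 0" "K1 w = a *s w" "K2 w = b *s w" "E1 w = 0"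
    by (rule exists_joint_eigenvector_E1_zero)
  have "b \<noteq> 0"
    using left_inverse_eigenvalue_nonzero[where T = K2, OF lin_K2i w(1,2) K2i_K2[OF w(1)] w(4)] .
  then obtain l where l: "(E2 ^^ l) w \<noteq> 0" "(E2 ^^ Suc l) w = 0"
    using funpow_last_nonzero[OF lin_K2 lin_E2 w(1,2,4) K2_E2_eigenvector] inj_power2_mult(1)[OF q_nonzero q_not_root_of_unity]
    by blast
  show ?thesis
  proof (rule that)
    show "(E2 ^^ l) w \<in> V" using lin_on_mem[OF lin_on_funpow[OF lin_E2] w(1)] .
    show "K1 ((E2 ^^ l) w) = a *s (E2 ^^ l) w"
      by (rule funpow_commuting_eigenvector[OF lin_E2 w(1,3) K1_E2])
    show "K2 ((E2 ^^ l) w) = ((q\<^sup>2) ^ l * b) *s (E2 ^^ l) w"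
      by (rule funpow_eigenvector[OF lin_E2 w(1,4) K2_E2_eigenvector])
    show "E1 ((E2 ^^ l) w) = 0"
      using funpow_commute[where A = E1, OF lin_E2 w(1) E1_E2] w(5) lin_on_zero[OF lin_on_funpow[OF lin_E2]]
      by simp
  qed (use l in simp_all)
qed

end

section \<open>The modules (L_m \<otimes> L_n)^{\<delta>,\<lambda>}\<close>

lemma sum_atMost_shift: "g 0 = 0 \<Longrightarrow> (\<Sum>i\<le>k. g i) = (\<Sum>i<k. g (Suc i))"
  unfolding lessThan_Suc_atMost[symmetric] sum.lessThan_Suc_shift by simp

lemma sum_atMost_drop_last:
  fixes g :: "nat \<Rightarrow> 'a::comm_monoid_add"
  shows "g k = 0 \<Longrightarrow> (\<Sum>i\<le>k. g i) = (\<Sum>i<k. g i)"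
  using sum.lessThan_Suc[of g k] by (simp add: lessThan_Suc_atMost)

lemma Lcarrier_add: "f \<in> Lcarrier m n \<Longrightarrow> g \<in> Lcarrier m n \<Longrightarrow> f + g \<in> Lcarrier m n"
  unfolding Lcarrier_def by auto

lemma Lcarrier_diff: "f \<in> Lcarrier m n \<Longrightarrow> g \<in> Lcarrier m n \<Longrightarrow> f - g \<in> Lcarrier m n"
  unfolding Lcarrier_def by auto

lemma Lcarrier_fscale: "f \<in> Lcarrier m n \<Longrightarrow> fscale c f \<in> Lcarrier m n"
  unfolding Lcarrier_def fscale_def by auto

lemma Lops_closed: "h \<in> wq_gens (Lops q m n d lam) \<Longrightarrow> f \<in> Lcarrier m n \<Longrightarrow> h f \<in> Lcarrier m n"
  unfolding wq_gens_def Lcarrier_def Lops_def by auto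

lemma inv_into_commute:
  assumes \<phi>: "bij_betw \<phi> V W" and g: "\<And>x. x \<in> V \<Longrightarrow> g x \<in> V" "\<And>x. x \<in> V \<Longrightarrow> \<phi> (g x) = G (\<phi> x)"
    and y: "y \<in> W"
  shows "inv_into V \<phi> (G y) = g (inv_into V \<phi> y)"
proof -
  have "inv_into V \<phi> y \<in> V" "\<phi> (inv_into V \<phi> y) = y"
    using \<phi> y by (auto simp: bij_betw_def inv_into_into f_inv_into_f)
  then show ?thesis using \<phi> g by (metis bij_betw_def inv_into_f_f)
qed

lemma wq_iso_sym:
  assumes iso: "wq_iso sc V r sc' W r'"
    and closed: "\<And>x y. x \<in> V \<Longrightarrow> y \<in> V \<Longrightarrow> x + y \<in> V" "\<And>c x. x \<in> V \<Longrightarrow> sc c x \<in> V"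
      "\<And>f x. f \<in> wq_gens r \<Longrightarrow> x \<in> V \<Longrightarrow> f x \<in> V"
  shows "wq_iso sc' W r' sc V r"
proof -
  obtain \<phi> where \<phi>: "bij_betw \<phi> V W" "\<forall>x\<in>V. \<forall>y\<in>V. \<phi> (x + y) = \<phi> x + \<phi> y"
      "\<forall>c. \<forall>x\<in>V. \<phi> (sc c x) = sc' c (\<phi> x)"
    and gens: "\<forall>x\<in>V. \<phi> (opE1 r x) = opE1 r' (\<phi> x) \<and> \<phi> (opE2 r x) = opE2 r' (\<phi> x) \<and>
              \<phi> (opF1 r x) = opF1 r' (\<phi> x) \<and> \<phi> (opF2 r x) = opF2 r' (\<phi> x) \<and>
              \<phi> (opK1 r x) = opK1 r' (\<phi> x) \<and> \<phi> (opK1i r x) = opK1i r' (\<phi> x) \<and>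
              \<phi> (opK2 r x) = opK2 r' (\<phi> x) \<and> \<phi> (opK2i r x) = opK2i r' (\<phi> x) \<and>
              \<phi> (opI r x) = opI r' (\<phi> x) \<and> \<phi> (opIi r x) = opIi r' (\<phi> x)"
    using iso unfolding wq_iso_def by blast
  let ?\<psi> = "inv_into V \<phi>"
  have \<psi>: "bij_betw ?\<psi> W V" by (rule bij_betw_inv_into[OF \<phi>(1)])
  note commute = inv_into_commute[OF \<phi>(1)]
  show ?thesis unfolding wq_iso_def
  proof (intro exI[of _ ?\<psi>] conjI ballI allI)
    fix y z assume "y \<in> W" "z \<in> W"
    then show "?\<psi> (y + z) = ?\<psi> y + ?\<psi> z"
      using commute[where g = "\<lambda>x. x + ?\<psi> z" and G = "\<lambda>x. x + z"] \<psi> \<phi>(1,2) closed(1)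
      by (simp add: bij_betwE bij_betw_def f_inv_into_f)
  next
    fix c y assume "y \<in> W"
    then show "?\<psi> (sc' c y) = sc c (?\<psi> y)"
      using commute[where g = "sc c" and G = "sc' c"] \<phi>(3) closed(2) by simp
  next
    fix y assume y: "y \<in> W"
    have gen_closed: "\<And>x. x \<in> V \<Longrightarrow> f x \<in> V" if "f \<in> wq_gens r" for f using closed(3) that by blast
    note t = commute[OF gen_closed _ y] and g = gens[rule_format]
    show "?\<psi> (opE1 r' y) = opE1 r (?\<psi> y)" by (rule t) (simp_all add: wq_gens_def g)
    show "?\<psi> (opE2 r' y) = opE2 r (?\<psi> y)" by (rule t) (simp_all add: wq_gens_def g)
    show "?\<psi> (opF1 r' y) = opF1 r (?\<psi> y)" by (rule t) (simp_all add: wq_gens_def g)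
    show "?\<psi> (opF2 r' y) = opF2 r (?\<psi> y)" by (rule t) (simp_all add: wq_gens_def g)
    show "?\<psi> (opK1 r' y) = opK1 r (?\<psi> y)" by (rule t) (simp_all add: wq_gens_def g)
    show "?\<psi> (opK1i r' y) = opK1i r (?\<psi> y)" by (rule t) (simp_all add: wq_gens_def g)
    show "?\<psi> (opK2 r' y) = opK2 r (?\<psi> y)" by (rule t) (simp_all add: wq_gens_def g)
    show "?\<psi> (opK2i r' y) = opK2i r (?\<psi> y)" by (rule t) (simp_all add: wq_gens_def g)
    show "?\<psi> (opI r' y) = opI r (?\<psi> y)" by (rule t) (simp_all add: wq_gens_def g)
    show "?\<psi> (opIi r' y) = opIi r (?\<psi> y)" by (rule t) (simp_all add: wq_gens_def g)
  qed (rule \<psi>)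
qed

section \<open>A weight basis of an irreducible module\<close>

locale wq_highest_weight = wq_irreducible_module sc V q r
  for sc :: "complex \<Rightarrow> 'v::ab_group_add \<Rightarrow> 'v" (infixr \<open>*s\<close> 75) and V q r +
  fixes \<nu> a b :: complex and v0 :: 'v
  assumes nu_nonzero: "\<nu> \<noteq> 0" and I_eq_scale: "\<And>x. x \<in> V \<Longrightarrow> I x = \<nu> *s x"
    and v0_mem: "v0 \<in> V" and v0_nonzero: "v0 \<noteq> 0"
    and K1_v0: "K1 v0 = a *s v0" and K2_v0: "K2 v0 = b *s v0"
    and E1_v0: "E1 v0 = 0" and E2_v0: "E2 v0 = 0"
begin

sublocale sl2_1: uq_sl2_action sc V q \<nu> E1 F1 K1 K1i
  by unfold_locales
    (simp_all add: q_nonzero q_not_root_of_unity lin_E1 lin_F1 lin_K1 lin_K1i K1i_K1 K1_F1 E1_F1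
      I_eq_scale lin_on_mem[OF lin_K1i])

(* [E2, F2] = (I K2 - K2^-1) / (q - q^-1) is the relation of the locale for K = \<nu> K2. *)
sublocale sl2_2: uq_sl2_action sc V q \<nu> E2 F2 "\<lambda>x. \<nu> *s K2 x" "\<lambda>x. inverse \<nu> *s K2i x"
  by unfold_locales
    (simp_all add: q_nonzero q_not_root_of_unity lin_E2 lin_F2 lin_on_scaled lin_K2 lin_K2i K2i_K2 K2_F2 E2_F2
      I_eq_scale lin_on_mem[OF lin_K2] lin_on_scale[OF lin_K2i] lin_on_scale[OF lin_F2] nu_nonzero
      scale_left_commute[of \<nu>])

lemma highest_weight_parameters:
  obtains m n lam d where "(F1 ^^ Suc m) v0 = 0" "(F2 ^^ Suc n) v0 = 0"
    "a = lam * q ^ m" "b = d * inverse lam * q ^ n" "\<nu> = lam\<^sup>2" "d \<in> {1, -1}" "lam \<noteq> 0"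
proof -
  have hw1: "sl2_1.highest_weight_vector v0 a"
    using v0_mem v0_nonzero E1_v0 K1_v0 by (simp add: sl2_1.highest_weight_vector_def)
  have hw2: "sl2_2.highest_weight_vector v0 (\<nu> * b)"
    using v0_mem v0_nonzero E2_v0 K2_v0 by (simp add: sl2_2.highest_weight_vector_def)
  obtain m where m: "(F1 ^^ m) v0 \<noteq> 0" "(F1 ^^ Suc m) v0 = 0"
    by (rule sl2_1.Fpow_last_nonzero[OF hw1])
  obtain n where n: "(F2 ^^ n) v0 \<noteq> 0" "(F2 ^^ Suc n) v0 = 0"
    by (rule sl2_2.Fpow_last_nonzero[OF hw2])
  have am: "a\<^sup>2 = \<nu> * q ^ (2 * m)" by (rule sl2_1.highest_weight_square[OF hw1 m])
  have "(\<nu> * b)\<^sup>2 = \<nu> * q ^ (2 * n)" by (rule sl2_2.highest_weight_square[OF hw2 n])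
  then have "\<nu> * (\<nu> * b\<^sup>2) = \<nu> * q ^ (2 * n)" by (simp add: power_mult_distrib power2_eq_square mult_ac)
  then have bn: "\<nu> * b\<^sup>2 = q ^ (2 * n)" using nu_nonzero by simp
  define lam where "lam = a / q ^ m"
  define d where "d = b * lam / q ^ n"
  have q_pow: "q ^ m \<noteq> 0" "q ^ n \<noteq> 0" using q_nonzero by auto
  have lam: "lam \<noteq> 0" unfolding lam_def using sl2_1.highest_weight_nonzero[OF hw1] q_pow by simp
  have \<nu>: "\<nu> = lam\<^sup>2" unfolding lam_def using am q_pow q_nonzero
    by (simp add: power_divide power_mult field_simps power2_eq_square)
  have "d\<^sup>2 = 1" unfolding d_def using bn \<nu> q_pow
    by (simp add: power_divide power_mult power_mult_distrib field_simps power2_eq_square)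
  then have "d \<in> {1, -1}" by (auto simp: power2_eq_1_iff)
  moreover have "a = lam * q ^ m" "b = d * inverse lam * q ^ n"
    unfolding lam_def d_def using q_nonzero sl2_1.highest_weight_nonzero[OF hw1] by (simp_all add: field_simps)
  ultimately show ?thesis using that m(2) n(2) \<nu> lam by blast
qed

end

locale wq_weight_basis = wq_highest_weight sc V q r \<nu> a b v0
  for sc :: "complex \<Rightarrow> 'v::ab_group_add \<Rightarrow> 'v" (infixr \<open>*s\<close> 75) and V q r \<nu> a b v0 +
  fixes m n :: nat and lam d :: complex
  assumes F1_top: "(F1 ^^ Suc m) v0 = 0" and F2_top: "(F2 ^^ Suc n) v0 = 0"
    and a_eq: "a = lam * q ^ m" and b_eq: "b = d * inverse lam * q ^ n" and nu_eq: "\<nu> = lam\<^sup>2"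
    and d_sign: "d \<in> {1, -1}" and lam_nonzero: "lam \<noteq> 0"
begin

abbreviation "L \<equiv> Lcarrier m n"
abbreviation "Lo \<equiv> Lops q m n d lam"

lemma nu_eq_d_lam: "\<nu> = (d * lam)\<^sup>2"
  using nu_eq d_sign by (auto simp: power_mult_distrib)

lemma v0_highest2: "sl2_2.highest_weight_vector v0 (d * lam * q ^ n)"
proof -
  have "\<nu> * b = d * lam * q ^ n" using lam_nonzero by (simp add: nu_eq b_eq power2_eq_square)
  then show ?thesis
    using v0_mem v0_nonzero E2_v0 K2_v0 by (simp add: sl2_2.highest_weight_vector_def)
qed

lemma F2pow_v0_mem: "(F2 ^^ j) v0 \<in> V"
  using lin_on_mem[OF lin_on_funpow[OF lin_F2] v0_mem] .

lemma K1_F2pow_v0: "K1 ((F2 ^^ j) v0) = a *s (F2 ^^ j) v0"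
  by (rule funpow_commuting_eigenvector[OF lin_F2 v0_mem K1_v0 K1_F2])

lemma K2_F2pow_v0: "K2 ((F2 ^^ j) v0) = (inverse (q\<^sup>2) ^ j * b) *s (F2 ^^ j) v0"
proof -
  have "K2 (F2 y) = (inverse (q\<^sup>2) * \<mu>) *s F2 y" if "y \<in> V" "K2 y = \<mu> *s y" for y \<mu>
    using that by (simp add: K2_F2 lin_on_scale[OF lin_F2])
  from funpow_eigenvector[OF lin_F2 v0_mem K2_v0 this] show ?thesis .
qed

lemma E1_F2pow_v0: "E1 ((F2 ^^ j) v0) = 0"
  using funpow_commute[where A = E1, OF lin_F2 v0_mem E1_F2] E1_v0 lin_on_zero[OF lin_on_funpow[OF lin_F2]]
  by simp

lemma F2pow_v0_highest1: "j \<le> n \<Longrightarrow> sl2_1.highest_weight_vector ((F2 ^^ j) v0) (lam * q ^ m)"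
  using F2pow_v0_mem sl2_2.Fpow_nonzero[OF v0_highest2 nu_eq_d_lam] E1_F2pow_v0 K1_F2pow_v0
  unfolding sl2_1.highest_weight_vector_def a_eq by blast

definition basis_vec :: "nat \<Rightarrow> nat \<Rightarrow> 'v" where
  "basis_vec i j = (F1 ^^ i) ((F2 ^^ j) v0)"

lemma basis_vec_mem: "basis_vec i j \<in> V"
  unfolding basis_vec_def using lin_on_mem[OF lin_on_funpow[OF lin_F1] F2pow_v0_mem] .

lemma basis_vec_nonzero: "i \<le> m \<Longrightarrow> j \<le> n \<Longrightarrow> basis_vec i j \<noteq> 0"
  unfolding basis_vec_def by (rule sl2_1.Fpow_nonzero[OF F2pow_v0_highest1 nu_eq])

lemma F1_basis_vec: "F1 (basis_vec i j) = basis_vec (Suc i) j"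
  by (simp add: basis_vec_def)

lemma F2_basis_vec: "F2 (basis_vec i j) = basis_vec i (Suc j)"
  unfolding basis_vec_def
  using funpow_commute[where A = F2, OF lin_F1 F2pow_v0_mem F1_F2[THEN sym]] by simp

lemma basis_vec_Suc_m: "basis_vec (Suc m) j = 0"
proof -
  have "(F1 ^^ Suc m) (F2 y) = F2 ((F1 ^^ Suc m) y)" if "y \<in> V" for y
    by (rule funpow_commute[where A = F2, OF lin_F1 that F1_F2[THEN sym], THEN sym])
  then have "(F1 ^^ Suc m) ((F2 ^^ j) v0) = (F2 ^^ j) ((F1 ^^ Suc m) v0)"
    by (rule funpow_commute[OF lin_F2 v0_mem])
  then show ?thesis
    using F1_top lin_on_zero[OF lin_on_funpow[OF lin_F2]] unfolding basis_vec_def by simp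
qed

lemma basis_vec_Suc_n: "basis_vec i (Suc n) = 0"
  using F2_top lin_on_zero[OF lin_on_funpow[OF lin_F1]] unfolding basis_vec_def by simp

lemma K1_basis_vec: "K1 (basis_vec i j) = (lam * q powi (int m - 2 * int i)) *s basis_vec i j"
  using sl2_1.K_Fpow[OF F2pow_v0_mem K1_F2pow_v0, of i]
  unfolding basis_vec_def power_int_diff_double[OF q_nonzero] by (simp add: a_eq mult_ac)

lemma K2_basis_vec: "K2 (basis_vec i j) = (d * inverse lam * q powi (int n - 2 * int j)) *s basis_vec i j"
  using funpow_commuting_eigenvector[OF lin_F1 F2pow_v0_mem K2_F2pow_v0 K2_F1, of i]
  unfolding basis_vec_def power_int_diff_double[OF q_nonzero] by (simp add: b_eq mult_ac)

lemma K1i_basis_vec: "K1i (basis_vec i j) = (inverse lam * q powi (2 * int i - int m)) *s basis_vec i j"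
  using left_inverse_eigenvector[where T = K1, OF lin_K1i basis_vec_mem K1i_K1[OF basis_vec_mem]
      K1_basis_vec] lam_nonzero q_nonzero
  by (simp flip: power_int_minus)

lemma K2i_basis_vec: "K2i (basis_vec i j) = (inverse d * lam * q powi (2 * int j - int n)) *s basis_vec i j"
  using left_inverse_eigenvector[where T = K2, OF lin_K2i basis_vec_mem K2i_K2[OF basis_vec_mem]
      K2_basis_vec] lam_nonzero q_nonzero d_sign
  by (auto simp flip: power_int_minus)

lemma I_basis_vec: "I (basis_vec i j) = lam\<^sup>2 *s basis_vec i j"
  using I_eq_scale[OF basis_vec_mem] by (simp add: nu_eq)

lemma Ii_basis_vec: "Ii (basis_vec i j) = inverse (lam\<^sup>2) *s basis_vec i j"
  using left_inverse_eigenvector[where T = I, OF lin_Ii basis_vec_mem Ii_I[OF basis_vec_mem] I_basis_vec]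
    lam_nonzero by simp

lemma E1_basis_vec_0: "E1 (basis_vec 0 j) = 0"
  by (simp add: basis_vec_def E1_F2pow_v0)

lemma E1_basis_vec_Suc:
  "i \<le> m \<Longrightarrow> j \<le> n \<Longrightarrow> E1 (basis_vec (Suc i) j) = (lam * qint q (Suc i) * qint q (m - i)) *s basis_vec i j"
  unfolding basis_vec_def by (rule sl2_1.E_Fpow_Suc_qint[OF F2pow_v0_highest1 nu_eq])

lemma E2_basis_vec_0: "E2 (basis_vec i 0) = 0"
  unfolding basis_vec_def
  using funpow_commute[where A = E2, OF lin_F1 v0_mem F1_E2[THEN sym]] E2_v0
    lin_on_zero[OF lin_on_funpow[OF lin_F1]] by simp

lemma E2_basis_vec_Suc:
  assumes "j \<le> n"
  shows "E2 (basis_vec i (Suc j)) = (d * lam * qint q (Suc j) * qint q (n - j)) *s basis_vec i j"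
proof -
  have "E2 (basis_vec i (Suc j)) = (F1 ^^ i) (E2 ((F2 ^^ Suc j) v0))"
    unfolding basis_vec_def by (rule funpow_commute[where A = E2, OF lin_F1 F2pow_v0_mem F1_E2[THEN sym]])
  also have "E2 ((F2 ^^ Suc j) v0) = (d * lam * qint q (Suc j) * qint q (n - j)) *s (F2 ^^ j) v0"
    by (rule sl2_2.E_Fpow_Suc_qint[OF v0_highest2 nu_eq_d_lam assms])
  finally show ?thesis
    unfolding basis_vec_def using lin_on_scale[OF lin_on_funpow[OF lin_F1] F2pow_v0_mem] by simp
qed

definition from_coords :: "(nat \<times> nat \<Rightarrow> complex) \<Rightarrow> 'v" where
  "from_coords f = (\<Sum>i\<le>m. \<Sum>j\<le>n. f (i, j) *s basis_vec i j)"

lemma from_coords_mem: "from_coords f \<in> V"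
  unfolding from_coords_def
  by (intro subspace_sum[OF subspace_V] subspace_scale[OF subspace_V] basis_vec_mem)

lemma from_coords_add: "from_coords (f + g) = from_coords f + from_coords g"
  unfolding from_coords_def by (simp add: scale_left_distrib sum.distrib)

lemma from_coords_diff: "from_coords (f - g) = from_coords f - from_coords g"
  unfolding from_coords_def by (simp add: scale_left_diff_distrib sum_subtractf)

lemma from_coords_zero: "from_coords 0 = 0"
  by (simp add: from_coords_def)

lemma from_coords_fscale: "from_coords (fscale c f) = c *s from_coords f"
  unfolding from_coords_def fscale_def by (simp add: scale_sum_right)

lemma lin_on_from_coords:
  assumes T: "lin_on sc V T"
  shows "T (from_coords f) = (\<Sum>i\<le>m. \<Sum>j\<le>n. f (i, j) *s T (basis_vec i j))"
proof -
  have "T (from_coords f) = (\<Sum>i\<le>m. T (\<Sum>j\<le>n. f (i, j) *s basis_vec i j))"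
    unfolding from_coords_def
    by (rule lin_on_sum[OF T]) (intro subspace_sum[OF subspace_V] subspace_scale[OF subspace_V] basis_vec_mem)
  also have "\<dots> = (\<Sum>i\<le>m. \<Sum>j\<le>n. T (f (i, j) *s basis_vec i j))"
    by (intro sum.cong refl lin_on_sum[OF T] subspace_scale[OF subspace_V] basis_vec_mem)
  also have "\<dots> = (\<Sum>i\<le>m. \<Sum>j\<le>n. f (i, j) *s T (basis_vec i j))"
    by (intro sum.cong refl lin_on_scale[OF T] basis_vec_mem)
  finally show ?thesis .
qed

lemma from_coords_diagonal:
  assumes "lin_on sc V T" and "\<And>i j. T (basis_vec i j) = w i j *s basis_vec i j"
  shows "T (from_coords f) = from_coords (\<lambda>(i, j). w i j * f (i, j))"
  unfolding lin_on_from_coords[OF assms(1)] unfolding from_coords_def by (simp add: assms(2) mult.commute)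

lemma
  shows from_coords_K1: "K1 (from_coords f) = from_coords (opK1 Lo f)"
    and from_coords_K1i: "K1i (from_coords f) = from_coords (opK1i Lo f)"
    and from_coords_K2: "K2 (from_coords f) = from_coords (opK2 Lo f)"
    and from_coords_K2i: "K2i (from_coords f) = from_coords (opK2i Lo f)"
    and from_coords_I: "I (from_coords f) = from_coords (opI Lo f)"
    and from_coords_Ii: "Ii (from_coords f) = from_coords (opIi Lo f)"
  by (simp_all add: Lops_def from_coords_diagonal[OF lin_K1 K1_basis_vec]
      from_coords_diagonal[OF lin_K1i K1i_basis_vec] from_coords_diagonal[OF lin_K2 K2_basis_vec]
      from_coords_diagonal[OF lin_K2i K2i_basis_vec] from_coords_diagonal[OF lin_I I_basis_vec]
      from_coords_diagonal[OF lin_Ii Ii_basis_vec] split_def)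

lemma from_coords_F1: "F1 (from_coords f) = from_coords (opF1 Lo f)"
proof -
  have "F1 (from_coords f) = (\<Sum>i\<le>m. \<Sum>j\<le>n. f (i, j) *s basis_vec (Suc i) j)"
    unfolding lin_on_from_coords[OF lin_F1] F1_basis_vec ..
  also have "\<dots> = (\<Sum>i<m. \<Sum>j\<le>n. f (i, j) *s basis_vec (Suc i) j)"
    by (rule sum_atMost_drop_last) (simp add: basis_vec_Suc_m)
  also have "\<dots> = (\<Sum>i\<le>m. \<Sum>j\<le>n. opF1 Lo f (i, j) *s basis_vec i j)"
    by (subst sum_atMost_shift) (auto simp: Lops_def intro!: sum.cong)
  finally show ?thesis unfolding from_coords_def .
qed

lemma from_coords_F2: "F2 (from_coords f) = from_coords (opF2 Lo f)"
proof -
  have "F2 (from_coords f) = (\<Sum>i\<le>m. \<Sum>j\<le>n. f (i, j) *s basis_vec i (Suc j))"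
    unfolding lin_on_from_coords[OF lin_F2] F2_basis_vec ..
  also have "\<dots> = (\<Sum>i\<le>m. \<Sum>j<n. f (i, j) *s basis_vec i (Suc j))"
    by (intro sum.cong refl sum_atMost_drop_last) (simp add: basis_vec_Suc_n)
  also have "\<dots> = (\<Sum>i\<le>m. \<Sum>j\<le>n. opF2 Lo f (i, j) *s basis_vec i j)"
  proof (rule sum.cong[OF refl])
    fix i
    show "(\<Sum>j<n. f (i, j) *s basis_vec i (Suc j)) = (\<Sum>j\<le>n. opF2 Lo f (i, j) *s basis_vec i j)"
      by (subst sum_atMost_shift) (auto simp: Lops_def intro!: sum.cong)
  qed
  finally show ?thesis unfolding from_coords_def .
qed

lemma from_coords_E1: "E1 (from_coords f) = from_coords (opE1 Lo f)"
proof -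
  have "E1 (from_coords f) = (\<Sum>i\<le>m. \<Sum>j\<le>n. f (i, j) *s E1 (basis_vec i j))"
    unfolding lin_on_from_coords[OF lin_E1] ..
  also have "\<dots> = (\<Sum>i<m. \<Sum>j\<le>n. f (Suc i, j) *s E1 (basis_vec (Suc i) j))"
    by (rule sum_atMost_shift) (simp add: E1_basis_vec_0)
  also have "\<dots> = (\<Sum>i<m. \<Sum>j\<le>n. opE1 Lo f (i, j) *s basis_vec i j)"
    by (intro sum.cong refl) (simp add: E1_basis_vec_Suc Lops_def mult_ac)
  also have "\<dots> = (\<Sum>i\<le>m. \<Sum>j\<le>n. opE1 Lo f (i, j) *s basis_vec i j)"
    by (rule sum_atMost_drop_last[symmetric]) (simp add: Lops_def)
  finally show ?thesis unfolding from_coords_def .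
qed

lemma from_coords_E2: "E2 (from_coords f) = from_coords (opE2 Lo f)"
proof -
  have "E2 (from_coords f) = (\<Sum>i\<le>m. \<Sum>j\<le>n. f (i, j) *s E2 (basis_vec i j))"
    unfolding lin_on_from_coords[OF lin_E2] ..
  also have "\<dots> = (\<Sum>i\<le>m. \<Sum>j<n. f (i, Suc j) *s E2 (basis_vec i (Suc j)))"
    by (intro sum.cong refl sum_atMost_shift) (simp add: E2_basis_vec_0)
  also have "\<dots> = (\<Sum>i\<le>m. \<Sum>j<n. opE2 Lo f (i, j) *s basis_vec i j)"
    by (intro sum.cong refl) (simp add: E2_basis_vec_Suc Lops_def mult_ac)
  also have "\<dots> = (\<Sum>i\<le>m. \<Sum>j\<le>n. opE2 Lo f (i, j) *s basis_vec i j)"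
    by (intro sum.cong refl sum_atMost_drop_last[symmetric]) (simp add: Lops_def)
  finally show ?thesis unfolding from_coords_def .
qed

lemmas from_coords_generators = from_coords_E1 from_coords_E2 from_coords_F1 from_coords_F2
  from_coords_K1 from_coords_K1i from_coords_K2 from_coords_K2i from_coords_I from_coords_Ii

lemma basis_row_independent:
  assumes "(\<Sum>j\<le>n. c j *s basis_vec i j) = 0" and "i \<le> m" and "j \<le> n"
  shows "c j = 0"
proof -
  have "d * inverse lam \<noteq> 0" using lam_nonzero d_sign by auto
  from inj_weight_string[OF q_nonzero q_not_root_of_unity this]
  have inj: "inj_on (\<lambda>j. d * inverse lam * q powi (int n - 2 * int j)) {..n}"
    by (rule inj_on_subset) simp
  have "c j *s basis_vec i j \<in> V \<and>
      K2 (c j *s basis_vec i j) = (d * inverse lam * q powi (int n - 2 * int j)) *s c j *s basis_vec i j" for j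
    by (simp add: subspace_scale[OF subspace_V] basis_vec_mem lin_on_scale[OF lin_K2 basis_vec_mem]
        K2_basis_vec scale_left_commute)
  then have "\<forall>j\<in>{..n}. c j *s basis_vec i j = 0"
    using eigenvectors_sum_eq_0[OF lin_K2 finite_atMost inj, where w = "\<lambda>j. c j *s basis_vec i j"] assms(1)
    by blast
  then show ?thesis using basis_vec_nonzero[OF assms(2,3)] assms(3) by auto
qed

lemma from_coords_eq_0_rows:
  assumes "from_coords f = 0" and "i \<le> m"
  shows "(\<Sum>j\<le>n. f (i, j) *s basis_vec i j) = 0"
proof -
  define row where "row i = (\<Sum>j\<le>n. f (i, j) *s basis_vec i j)" for i
  have inj: "inj_on (\<lambda>i. lam * q powi (int m - 2 * int i)) {..m}"
    using inj_weight_string[OF q_nonzero q_not_root_of_unity lam_nonzero] by (rule inj_on_subset) simp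
  have row_eigenvector: "row i \<in> V \<and> K1 (row i) = (lam * q powi (int m - 2 * int i)) *s row i" for i
  proof
    show "row i \<in> V"
      unfolding row_def by (intro subspace_sum[OF subspace_V] subspace_scale[OF subspace_V] basis_vec_mem)
    have "K1 (row i) = (\<Sum>j\<le>n. K1 (f (i, j) *s basis_vec i j))"
      unfolding row_def by (rule lin_on_sum[OF lin_K1]) (intro subspace_scale[OF subspace_V] basis_vec_mem)
    then show "K1 (row i) = (lam * q powi (int m - 2 * int i)) *s row i"
      unfolding row_def
      by (simp add: lin_on_scale[OF lin_K1 basis_vec_mem] K1_basis_vec scale_sum_right mult.commute)
  qed
  have "\<forall>i\<in>{..m}. row i = 0"
    using eigenvectors_sum_eq_0[OF lin_K1 finite_atMost inj row_eigenvector] assms(1)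
    unfolding from_coords_def row_def by blast
  then show ?thesis using assms(2) unfolding row_def by simp
qed

lemma from_coords_eq_0:
  assumes f: "f \<in> L" and zero: "from_coords f = 0"
  shows "f = 0"
proof -
  have "f (i, j) = 0" for i j
  proof (cases "i \<le> m \<and> j \<le> n")
    case True
    then show ?thesis using basis_row_independent[OF from_coords_eq_0_rows[OF zero]] by blast
  next
    case False
    then show ?thesis using f unfolding Lcarrier_def by (auto simp: not_le)
  qed
  then show ?thesis by (simp add: fun_eq_iff)
qed

lemma inj_on_from_coords: "inj_on from_coords L"
proof (rule inj_onI)
  fix f g assume fg: "f \<in> L" "g \<in> L" "from_coords f = from_coords g"
  then have "from_coords (f - g) = 0" by (simp add: from_coords_diff)
  then have "f - g = 0" by (rule from_coords_eq_0[OF Lcarrier_diff[OF fg(1,2)]])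
  then show "f = g" by simp
qed

lemma from_coords_generator:
  "h \<in> wq_gens r \<Longrightarrow> \<exists>H\<in>wq_gens Lo. \<forall>f. h (from_coords f) = from_coords (H f)"
  unfolding wq_gens_def by (elim insertE emptyE) (simp_all add: from_coords_generators)

lemma subspace_from_coords_image: "subspace (from_coords ` L)"
  unfolding subspace_def
proof (intro conjI ballI allI)
  have "0 \<in> L" by (simp add: Lcarrier_def)
  then show "0 \<in> from_coords ` L" using from_coords_zero by (metis image_eqI)
next
  fix x y assume "x \<in> from_coords ` L" "y \<in> from_coords ` L"
  then obtain f g where "f \<in> L" "g \<in> L" "x = from_coords f" "y = from_coords g" by blast
  then show "x + y \<in> from_coords ` L" using Lcarrier_add from_coords_add by (metis image_eqI)
next
  fix c x assume "x \<in> from_coords ` L"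
  then obtain f where "f \<in> L" "x = from_coords f" by blast
  then show "c *s x \<in> from_coords ` L" using Lcarrier_fscale from_coords_fscale by (metis image_eqI)
qed

lemma from_coords_image: "from_coords ` L = V"
proof -
  define W where "W = from_coords ` L"
  have "h ` W \<subseteq> W" if h: "h \<in> wq_gens r" for h
  proof
    fix y assume "y \<in> h ` W"
    then obtain f where f: "f \<in> L" "y = h (from_coords f)" unfolding W_def by blast
    obtain H where "H \<in> wq_gens Lo" "h (from_coords f) = from_coords (H f)"
      using from_coords_generator[OF h] by blast
    then show "y \<in> W" unfolding W_def using f Lops_closed by (metis image_eqI)
  qed
  moreover have "W \<noteq> {0}"
  proof -
    define e where "e = (\<lambda>p :: nat \<times> nat. if p = (0, 0) then 1 else (0::complex))"
    have "e \<in> L" "e \<noteq> 0" unfolding e_def Lcarrier_def by (auto simp: fun_eq_iff)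
    then have "from_coords e \<in> W" "from_coords e \<noteq> 0" unfolding W_def using from_coords_eq_0 by auto
    then show ?thesis by blast
  qed
  moreover have "W \<subseteq> V" unfolding W_def using from_coords_mem by blast
  ultimately have "W = V"
    using irreducible subspace_from_coords_image unfolding wq_irreducible_def W_def by blast
  then show ?thesis unfolding W_def .
qed

lemma wq_iso_Lops: "wq_iso sc V r fscale L Lo"
proof (rule wq_iso_sym)
  show "wq_iso fscale L Lo sc V r"
    unfolding wq_iso_def
    by (intro exI[of _ from_coords] conjI ballI allI)
      (simp_all add: bij_betw_def inj_on_from_coords from_coords_image from_coords_add from_coords_fscale
        from_coords_generators)
qed (simp_all add: Lcarrier_add Lcarrier_fscale Lops_closed)

end

context wq_irreducible_module
begin

lemma exists_wq_iso_Lops: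
  obtains m n d lam where "d \<in> {1, -1}" "lam \<noteq> 0" "wq_iso sc V r fscale (Lcarrier m n) (Lops q m n d lam)"
proof -
  obtain \<nu> where "\<nu> \<noteq> 0" "\<And>x. x \<in> V \<Longrightarrow> I x = \<nu> *s x"
    using I_acts_as_scalar by blast
  moreover obtain v a b where "v \<in> V" "v \<noteq> 0" "K1 v = a *s v" "K2 v = b *s v" "E1 v = 0" "E2 v = 0"
    using exists_highest_weight_vector by blast
  ultimately interpret wq_highest_weight sc V q r \<nu> a b v
    by unfold_locales
  obtain m n lam d where "(F1 ^^ Suc m) v = 0" "(F2 ^^ Suc n) v = 0"
    "a = lam * q ^ m" "b = d * inverse lam * q ^ n" "\<nu> = lam\<^sup>2" and d: "d \<in> {1, -1}" and lam: "lam \<noteq> 0"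
    using highest_weight_parameters by blast
  then interpret wq_weight_basis sc V q r \<nu> a b v m n lam d
    by unfold_locales
  show ?thesis using that d lam wq_iso_Lops by blast
qed

end

section \<open>Uniqueness of the parameters\<close>

definition eigenvalues_on :: "(complex \<Rightarrow> 'v::zero \<Rightarrow> 'v) \<Rightarrow> 'v set \<Rightarrow> ('v \<Rightarrow> 'v) \<Rightarrow> complex set" where
  "eigenvalues_on sc V T = {\<mu>. \<exists>x\<in>V. x \<noteq> 0 \<and> T x = sc \<mu> x}"

lemma eigenvalues_on_intertwined:
  assumes \<psi>: "inj_on \<psi> V" "\<psi> ` V = W" "\<psi> 0 = 0" "0 \<in> V"
    and scale: "\<And>c x. x \<in> V \<Longrightarrow> \<psi> (sc c x) = sc' c (\<psi> x)" "\<And>c x. x \<in> V \<Longrightarrow> sc c x \<in> V"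
    and T: "\<And>x. x \<in> V \<Longrightarrow> T x \<in> V" "\<And>x. x \<in> V \<Longrightarrow> \<psi> (T x) = T' (\<psi> x)"
  shows "eigenvalues_on sc V T = eigenvalues_on sc' W T'"
proof -
  have nonzero: "\<psi> x \<noteq> 0 \<longleftrightarrow> x \<noteq> 0" if "x \<in> V" for x
    using \<psi> that by (metis inj_on_eq_iff)
  have eigen: "T' (\<psi> x) = sc' \<mu> (\<psi> x) \<longleftrightarrow> T x = sc \<mu> x" if "x \<in> V" for x \<mu>
    using \<psi>(1) that T scale by (metis inj_on_eq_iff)
  show ?thesis
    unfolding eigenvalues_on_def using \<psi>(2) nonzero eigen by auto
qed

lemma wq_iso_eigenvalues_on:
  assumes module: "wq_module q sc V r" and iso: "wq_iso sc V r sc' W r'"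
  shows "eigenvalues_on sc V (opK1 r) = eigenvalues_on sc' W (opK1 r')"
    and "eigenvalues_on sc V (opK2 r) = eigenvalues_on sc' W (opK2 r')"
    and "eigenvalues_on sc V (opI r) = eigenvalues_on sc' W (opI r')"
proof -
  interpret vector_space sc using module by (simp add: wq_module_def)
  have V: "subspace V" using module by (simp add: wq_module_def)
  have maps: "\<forall>x\<in>V. opK1 r x \<in> V" "\<forall>x\<in>V. opK2 r x \<in> V" "\<forall>x\<in>V. opI r x \<in> V"
    using module by (simp_all add: wq_module_def wq_gens_def lin_on_def)
  obtain \<psi> where \<psi>: "bij_betw \<psi> V W" "\<forall>x\<in>V. \<forall>y\<in>V. \<psi> (x + y) = \<psi> x + \<psi> y"
      "\<forall>c. \<forall>x\<in>V. \<psi> (sc c x) = sc' c (\<psi> x)"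
    and gens: "\<forall>x\<in>V. \<psi> (opK1 r x) = opK1 r' (\<psi> x) \<and> \<psi> (opK2 r x) = opK2 r' (\<psi> x) \<and>
        \<psi> (opI r x) = opI r' (\<psi> x)"
    using iso unfolding wq_iso_def by blast
  have "\<psi> (0 + 0) = \<psi> 0 + \<psi> 0" using \<psi>(2) subspace_0[OF V] by blast
  then have "\<psi> 0 = 0" by simp
  note intertwined = eigenvalues_on_intertwined[OF bij_betw_imp_inj_on[OF \<psi>(1)] bij_betw_imp_surj_on[OF \<psi>(1)]
      this subspace_0[OF V]]
  show "eigenvalues_on sc V (opK1 r) = eigenvalues_on sc' W (opK1 r')"
    by (rule intertwined) (use \<psi>(3) subspace_scale[OF V] maps gens in auto)
  show "eigenvalues_on sc V (opK2 r) = eigenvalues_on sc' W (opK2 r')"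
    by (rule intertwined) (use \<psi>(3) subspace_scale[OF V] maps gens in auto)
  show "eigenvalues_on sc V (opI r) = eigenvalues_on sc' W (opI r')"
    by (rule intertwined) (use \<psi>(3) subspace_scale[OF V] maps gens in auto)
qed

lemma eigenvalues_on_Lcarrier_diagonal:
  assumes diag: "\<And>f i j. T f (i, j) = w i j * f (i, j)"
  shows "eigenvalues_on fscale (Lcarrier m n) T = {w i j | i j. i \<le> m \<and> j \<le> n}"
proof (intro equalityI subsetI)
  fix \<mu> assume "\<mu> \<in> eigenvalues_on fscale (Lcarrier m n) T"
  then obtain f where f: "f \<in> Lcarrier m n" "f \<noteq> 0" "T f = fscale \<mu> f"
    unfolding eigenvalues_on_def by blast
  obtain i j where ij: "f (i, j) \<noteq> 0" using f(2) by (auto simp: fun_eq_iff)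
  then have "i \<le> m" "j \<le> n" using f(1) unfolding Lcarrier_def by (auto simp: not_le[symmetric])
  moreover have "w i j * f (i, j) = \<mu> * f (i, j)"
    using fun_cong[OF f(3), of "(i, j)"] by (simp add: diag fscale_def)
  ultimately show "\<mu> \<in> {w i j | i j. i \<le> m \<and> j \<le> n}" using ij by auto
next
  fix \<mu> assume "\<mu> \<in> {w i j | i j. i \<le> m \<and> j \<le> n}"
  then obtain i j where ij: "i \<le> m" "j \<le> n" "\<mu> = w i j" by blast
  define e where "e = (\<lambda>p :: nat \<times> nat. if p = (i, j) then 1 else (0::complex))"
  have "e \<in> Lcarrier m n" "e \<noteq> 0" using ij unfolding e_def Lcarrier_def by (auto simp: fun_eq_iff)
  moreover have "T e = fscale \<mu> e"
    using ij by (auto simp: fun_eq_iff diag e_def fscale_def)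
  ultimately show "\<mu> \<in> eigenvalues_on fscale (Lcarrier m n) T"
    unfolding eigenvalues_on_def by blast
qed

lemma eigenvalues_on_Lops_K1:
  "eigenvalues_on fscale (Lcarrier m n) (opK1 (Lops q m n d lam)) = {lam * q powi (int m - 2 * int i) | i. i \<le> m}"
proof -
  have "eigenvalues_on fscale (Lcarrier m n) (opK1 (Lops q m n d lam))
      = {lam * q powi (int m - 2 * int i) | i j. i \<le> m \<and> j \<le> n}"
    by (rule eigenvalues_on_Lcarrier_diagonal) (simp add: Lops_def)
  then show ?thesis by auto
qed

lemma eigenvalues_on_Lops_K2:
  "eigenvalues_on fscale (Lcarrier m n) (opK2 (Lops q m n d lam))
    = {d * inverse lam * q powi (int n - 2 * int j) | j. j \<le> n}"
proof -
  have "eigenvalues_on fscale (Lcarrier m n) (opK2 (Lops q m n d lam))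
      = {d * inverse lam * q powi (int n - 2 * int j) | i j. i \<le> m \<and> j \<le> n}"
    by (rule eigenvalues_on_Lcarrier_diagonal) (simp add: Lops_def)
  then show ?thesis by auto
qed

lemma eigenvalues_on_Lops_I: "eigenvalues_on fscale (Lcarrier m n) (opI (Lops q m n d lam)) = {lam\<^sup>2}"
proof -
  have "eigenvalues_on fscale (Lcarrier m n) (opI (Lops q m n d lam)) = {lam\<^sup>2 | i j. i \<le> m \<and> j \<le> n}"
    by (rule eigenvalues_on_Lcarrier_diagonal) (simp add: Lops_def)
  then show ?thesis by auto
qed

lemma weight_string_eq_imp_eq:
  fixes q c c' :: complex
  assumes q: "q \<noteq> 0" "\<forall>k::nat. 0 < k \<longrightarrow> q ^ k \<noteq> 1"
    and c: "c \<noteq> 0" "c' \<noteq> 0" "c\<^sup>2 = c'\<^sup>2"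
    and eq: "{c * q powi (int M - 2 * int i) | i. i \<le> M} = {c' * q powi (int M' - 2 * int i) | i. i \<le> M'}"
  shows "M = M' \<and> c = c'"
proof -
  \<comment> \<open>Each top weight lies in the other string; multiplying the two relations shows both are tops.\<close>
  have "c * q powi int M \<in> {c * q powi (int M - 2 * int i) | i. i \<le> M}"
    by (intro CollectI exI[of _ 0]) simp
  then obtain i where i: "c * q powi int M = c' * q powi (int M' - 2 * int i)" using eq by blast
  have "c' * q powi int M' \<in> {c' * q powi (int M' - 2 * int i) | i. i \<le> M'}"
    by (intro CollectI exI[of _ 0]) simp
  then obtain i' where i': "c' * q powi int M' = c * q powi (int M - 2 * int i')" using eq by blast
  have "c * q powi int M * (c' * q powi int M')
      = c' * q powi (int M' - 2 * int i) * (c * q powi (int M - 2 * int i'))"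
    using i i' by simp
  then have "(c * c') * q powi (int M + int M') = (c * c') * q powi ((int M' - 2 * int i) + (int M - 2 * int i'))"
    using q(1) by (simp add: power_int_add ac_simps)
  then have "int M + int M' = (int M' - 2 * int i) + (int M - 2 * int i')"
    using c by (intro power_int_inj_of_not_root_of_unity[OF q]) simp
  then have top: "c * q ^ M = c' * q ^ M'" using i by simp
  then have "c\<^sup>2 * q ^ (2 * M) = c\<^sup>2 * q ^ (2 * M')"
    using c(3) by (metis power_mult_distrib power_mult mult.commute)
  then have "q ^ (2 * M) = q ^ (2 * M')" using c(1) by simp
  then have "2 * M = 2 * M'" by (rule power_inj_of_not_root_of_unity[OF q])
  then have "M = M'" by simp
  then show ?thesis using top q by simp
qed

lemma Lops_parameters_unique:
  assumes q: "q \<noteq> 0" "\<forall>k::nat. 0 < k \<longrightarrow> q ^ k \<noteq> 1" and module: "wq_module q sc V r"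
    and iso: "wq_iso sc V r fscale (Lcarrier m n) (Lops q m n d lam)" "d \<in> {1, -1}" "lam \<noteq> 0"
    and iso': "wq_iso sc V r fscale (Lcarrier m' n') (Lops q m' n' d' lam')" "d' \<in> {1, -1}" "lam' \<noteq> 0"
  shows "(m, n, d, lam) = (m', n', d', lam')"
proof -
  note spec = wq_iso_eigenvalues_on[OF module iso(1)] and spec' = wq_iso_eigenvalues_on[OF module iso'(1)]
  have "lam\<^sup>2 = lam'\<^sup>2"
    using spec(3) spec'(3) by (simp add: eigenvalues_on_Lops_I)
  moreover have "m = m' \<and> lam = lam'"
    using spec(1) spec'(1) iso(3) iso'(3) calculation
    by (intro weight_string_eq_imp_eq[OF q]) (simp_all add: eigenvalues_on_Lops_K1)
  moreover have "n = n' \<and> d * inverse lam = d' * inverse lam'"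
    using spec(2) spec'(2) iso(2,3) iso'(2,3) calculation
    by (intro weight_string_eq_imp_eq[OF q]) (auto simp: eigenvalues_on_Lops_K2 power_mult_distrib)
  ultimately show ?thesis using iso(3) by simp
qed

theorem mainTheorem8:
  fixes q :: complex and sc :: "complex \<Rightarrow> 'v::ab_group_add \<Rightarrow> 'v"
    and V :: "'v set" and r :: "'v wq_ops"
  assumes "q \<noteq> 0" and "\<forall>k::nat. 0 < k \<longrightarrow> q ^ k \<noteq> 1"
    and "wq_module q sc V r" and "fin_dim sc V" and "wq_irreducible sc V r"
  shows "\<exists>!(p :: nat \<times> nat \<times> complex \<times> complex).
           (case p of (m, n, d, lam) \<Rightarrow>
              d \<in> {1, -1} \<and> lam \<noteq> 0 \<and> wq_iso sc V r fscale (Lcarrier m n) (Lops q m n d lam))"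
proof -
  have "vector_space sc" "module.subspace sc V" using assms(3) by (simp_all add: wq_module_def)
  then interpret wq_irreducible_module sc V q r
    using assms by (simp add: wq_irreducible_module_def finite_dim_subspace_def
        finite_dim_subspace_axioms_def wq_irreducible_module_axioms_def)
  obtain m n d lam where iso: "d \<in> {1, -1}" "lam \<noteq> 0" "wq_iso sc V r fscale (Lcarrier m n) (Lops q m n d lam)"
    by (rule exists_wq_iso_Lops)
  show ?thesis
  proof (rule ex1I[of _ "(m, n, d, lam)"])
    fix p :: "nat \<times> nat \<times> complex \<times> complex"
    obtain m' n' d' lam' where p: "p = (m', n', d', lam')" by (cases p)
    assume "case p of (m, n, d, lam) \<Rightarrow>
      d \<in> {1, -1} \<and> lam \<noteq> 0 \<and> wq_iso sc V r fscale (Lcarrier m n) (Lops q m n d lam)"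
    then have "d' \<in> {1, -1}" "lam' \<noteq> 0" "wq_iso sc V r fscale (Lcarrier m' n') (Lops q m' n' d' lam')"
      using p by simp_all
    from Lops_parameters_unique[OF assms(1-3) iso(3,1,2) this(3,1,2)] show "p = (m, n, d, lam)"
      using p by simp
  qed (use iso in simp)
qed

end
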